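(* Consider the setting described in the context, and fix an initial pair $(t,x)$, i.e. $t\in\mathbb{T}$ and $x\in L^2_{\mathcal{F}}(t;\mathbb{R}^n)$. The following statements are equivalent. (i) There exists an open-loop equilibrium control of Problem (LQ) for the initial pair $(t,x)$. (ii) There exists a control $u^{t,x,*}\in L^2_{\mathcal{F}}(\mathbb{T}_t;\mathbb{R}^m)$ such that, letting $X^{t,x,*}$ be defined by $$X^{t,x,*}_{k+1}=A_{k,k}X^{t,x,*}_k+B_{k,k}u^{t,x,*}_k+\big(C_{k,k}X^{t,x,*}_k+D_{k,k}u^{t,x,*}_k\big)w_k,\quad X^{t,x,*}_t=x,\ k\in\mathbb{T}_t,$$ for every $k\in\mathbb{T}_t$ the forward-backward stochastic difference equation $$\begin{cases}X^{k,*}_{\ell+1}=A_{k,\ell}X^{k,*}_\ell+B_{k,\ell}u^{t,x,*}_\ell+\big(C_{k,\ell}X^{k,*}_\ell+D_{k,\ell}u^{t,x,*}_\ell\big)w_\ell,\\ Z^{k,*}_\ell=A_{k,\ell}^T\mathbb{E}(Z^{k,*}_{\ell+1}\mid\mathcal{F}_{\ell-1})+C_{k,\ell}^T\mathbb{E}(Z^{k,*}_{\ell+1}w_\ell\mid\mathcal{F}_{\ell-1})+Q_{k,\ell}X^{k,*}_\ell,\\ X^{k,*}_k=X^{t,x,*}_k,\quad Z^{k,*}_N=G_kX^{k,*}_N,\quad \ell\in\mathbb{T}_k\end{cases}$$ has a solution $(X^{k,*},Z^{k,*})$ satisfying the stationary condition $$0=R_{k,k}u^{t,x,*}_k+B_{k,k}^T\mathbb{E}(Z^{k,*}_{k+1}\mid\mathcal{F}_{k-1})+D_{k,k}^T\mathbb{E}(Z^{k,*}_{k+1}w_k\mid\mathcal{F}_{k-1}),$$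 and the convexity condition $$\inf_{\bar u_k\in L^2_{\mathcal{F}}(k;\mathbb{R}^m)}\Big\{\sum_{\ell=k}^{N-1}\mathbb{E}\big[(Y^k_\ell)^TQ_{k,\ell}Y^k_\ell\big]+\mathbb{E}\big[\bar u_k^TR_{k,k}\bar u_k\big]+\mathbb{E}\big[(Y^k_N)^TG_kY^k_N\big]\Big\}\ge 0$$ holds, where $Y^k$ is given by $Y^k_k=0$, $Y^k_{k+1}=B_{k,k}\bar u_k+D_{k,k}\bar u_kw_k$, and $Y^k_{\ell+1}=A_{k,\ell}Y^k_\ell+C_{k,\ell}Y^k_\ell w_\ell$ for $\ell\in\mathbb{T}_{k+1}$. Furthermore, any $u^{t,x,*}$ as in (ii) is an open-loop equilibrium control of Problem (LQ) for the initial pair $(t,x)$.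
   Context: Let $N$ be a positive integer, $\mathbb{T}=\{0,1,\dots,N-1\}$, $\mathbb{T}_t=\{t,\dots,N-1\}$ and $\widetilde{\mathbb{T}}_t=\{t,\dots,N\}$. On a probability space $(\Omega,\mathcal{F},P)$, $\{w_k\}$ is a scalar martingale difference sequence with $\mathbb{E}[w_{k+1}\mid\mathcal{F}_k]=0$ and $\mathbb{E}[w_{k+1}^2\mid\mathcal{F}_k]=1$ for $k\ge0$, where $\mathcal{F}_k=\sigma\{x_0,w_l,\ l=0,\dots,k\}$ and $\mathcal{F}_{-1}=\{\emptyset,\Omega\}$. For a Euclidean space $\mathcal{H}$, $L^2_{\mathcal{F}}(\mathbb{T}_t;\mathcal{H})$ is the set of $\mathcal{H}$-valued processes $\nu=\{\nu_k,k\in\mathbb{T}_t\}$ with each $\nu_k$ $\mathcal{F}_{k-1}$-measurable and $\sum_{k=t}^{N-1}\mathbb{E}|\nu_k|^2<\infty$; $L^2_{\mathcal{F}}(k;\mathcal{H})$ is the set of $\mathcal{F}_{k-1}$-measurable $\mathcal{H}$-valued random variables $\xi$ with $\mathbb{E}|\xi|^2<\infty$. For each $t\in\mathbb{T}$, $k\in\mathbb{T}_t$, let $A_{t,k},C_{t,k}\in\mathbb{R}^{n\times n}$, $B_{t,k},D_{t,k}\in\mathbb{R}^{n\times m}$ be deterministic matrices and $Q_{t,k}\in\mathbb{R}^{n\times n}$, $R_{t,k}\in\mathbb{R}^{m\times m}$, $G_t\in\mathbb{R}^{n\times n}$ deterministic symmetric matrices (no definiteness assumed). For $t\in\mathbb{T}$,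 $y\in L^2_{\mathcal{F}}(t;\mathbb{R}^n)$ and $u\in L^2_{\mathcal{F}}(\mathbb{T}_t;\mathbb{R}^m)$, the state $X^t$ solves $X^t_{k+1}=A_{t,k}X^t_k+B_{t,k}u_k+(C_{t,k}X^t_k+D_{t,k}u_k)w_k$, $X^t_t=y$, $k\in\mathbb{T}_t$, and the cost is $$J(t,y;u)=\sum_{k=t}^{N-1}\mathbb{E}\big[(X^t_k)^TQ_{t,k}X^t_k+u_k^TR_{t,k}u_k\big]+\mathbb{E}\big[(X^t_N)^TG_tX^t_N\big].$$ Problem (LQ) is to minimize $J(t,x;u)$ over $u\in L^2_{\mathcal{F}}(\mathbb{T}_t;\mathbb{R}^m)$. A control $u^{t,x,*}\in L^2_{\mathcal{F}}(\mathbb{T}_t;\mathbb{R}^m)$ is an open-loop equilibrium control of Problem (LQ) for the initial pair $(t,x)$ if for every $k\in\mathbb{T}_t$ and every $u_k\in L^2_{\mathcal{F}}(k;\mathbb{R}^m)$, $$J(k,X^{t,x,*}_k;u^{t,x,*}|_{\mathbb{T}_k})\le J(k,X^{t,x,*}_k;(u_k,u^{t,x,*}|_{\mathbb{T}_{k+1}})),$$ where $u^{t,x,*}|_{\mathbb{T}_k}$ denotes restriction to $\mathbb{T}_k$, $(u_k,u^{t,x,*}|_{\mathbb{T}_{k+1}})$ is the control equal to $u_k$ at time $k$ and to $u^{t,x,*}$ afterwards, and $X^{t,x,*}_{k+1}=A_{k,k}X^{t,x,*}_k+B_{k,k}u^{t,x,*}_k+(C_{k,k}X^{t,x,*}_k+D_{k,k}u^{t,x,*}_k)w_k$,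 $X^{t,x,*}_t=x$. *)

theory Defs
  imports "HOL-Probability.Probability"
begin

text \<open>Filtration.  Fprev M x0 w j is the sigma-algebra F_{j-1}: Fprev 0 = F_{-1} = {{},Omega},
  Fprev (Suc k) = F_k = sigma{x0, w_0, ..., w_k}.\<close>
definition Fprev :: "'a measure \<Rightarrow> ('a \<Rightarrow> real^'n) \<Rightarrow> (nat \<Rightarrow> 'a \<Rightarrow> real) \<Rightarrow> nat \<Rightarrow> 'a measure" where
  "Fprev M x0 w j = (if j = 0 then sigma (space M) {}
     else sigma (space M)
       ({x0 -` A \<inter> space M | A. A \<in> sets borel} \<union>
        {w l -` B \<inter> space M | l B. l \<le> j - 1 \<and> B \<in> sets borel}))"

definition cexp :: "'a measure \<Rightarrow> 'a measure \<Rightarrow> ('a \<Rightarrow> real^'n) \<Rightarrow> 'a \<Rightarrow> real^'n" where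
  "cexp M F Z = (\<lambda>\<omega>. \<chi> i. real_cond_exp M F (\<lambda>\<eta>. Z \<eta> $ i) \<omega>)"

definition L2k :: "'a measure \<Rightarrow> ('a \<Rightarrow> real^'n) \<Rightarrow> (nat \<Rightarrow> 'a \<Rightarrow> real) \<Rightarrow> nat
    \<Rightarrow> ('a \<Rightarrow> real^'m) set" where
  "L2k M x0 w k = {\<xi>. \<xi> \<in> borel_measurable (Fprev M x0 w k) \<and>
                       integrable M (\<lambda>\<omega>. (norm (\<xi> \<omega>))\<^sup>2)}"

text \<open>L^2_F(T_t;H): processes on {t..N-1} with nu_k in L^2_F(k;H) (the sum of finitely many
  finite second moments is finite).  Values outside T_t are irrelevant.\<close>
definition L2proc :: "'a measure \<Rightarrow> ('a \<Rightarrow> real^'n) \<Rightarrow> (nat \<Rightarrow> 'a \<Rightarrow> real) \<Rightarrow> nat \<Rightarrow> nat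
    \<Rightarrow> (nat \<Rightarrow> 'a \<Rightarrow> real^'m) set" where
  "L2proc M x0 w N t = {\<nu>. \<forall>k\<in>{t..<N}. \<nu> k \<in> L2k M x0 w k}"

primrec traj_aux :: "(nat \<Rightarrow> real^'n^'n) \<Rightarrow> (nat \<Rightarrow> real^'m^'n) \<Rightarrow> (nat \<Rightarrow> real^'n^'n)
    \<Rightarrow> (nat \<Rightarrow> real^'m^'n) \<Rightarrow> (nat \<Rightarrow> 'a \<Rightarrow> real) \<Rightarrow> nat \<Rightarrow> ('a \<Rightarrow> real^'n)
    \<Rightarrow> (nat \<Rightarrow> 'a \<Rightarrow> real^'m) \<Rightarrow> nat \<Rightarrow> 'a \<Rightarrow> real^'n" where
  "traj_aux a b c d w s y u 0 = y"
| "traj_aux a b c d w s y u (Suc i) = (\<lambda>\<omega>.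
     a (s+i) *v traj_aux a b c d w s y u i \<omega> + b (s+i) *v u (s+i) \<omega>
     + (w (s+i) \<omega>) *\<^sub>R (c (s+i) *v traj_aux a b c d w s y u i \<omega> + d (s+i) *v u (s+i) \<omega>))"

definition traj :: "(nat \<Rightarrow> real^'n^'n) \<Rightarrow> (nat \<Rightarrow> real^'m^'n) \<Rightarrow> (nat \<Rightarrow> real^'n^'n)
    \<Rightarrow> (nat \<Rightarrow> real^'m^'n) \<Rightarrow> (nat \<Rightarrow> 'a \<Rightarrow> real) \<Rightarrow> nat \<Rightarrow> ('a \<Rightarrow> real^'n)
    \<Rightarrow> (nat \<Rightarrow> 'a \<Rightarrow> real^'m) \<Rightarrow> nat \<Rightarrow> 'a \<Rightarrow> real^'n" where
  "traj a b c d w s y u l = traj_aux a b c d w s y u (l - s)"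

definition Jcost :: "'a measure \<Rightarrow> (nat \<Rightarrow> nat \<Rightarrow> real^'n^'n) \<Rightarrow> (nat \<Rightarrow> nat \<Rightarrow> real^'m^'n)
    \<Rightarrow> (nat \<Rightarrow> nat \<Rightarrow> real^'n^'n) \<Rightarrow> (nat \<Rightarrow> nat \<Rightarrow> real^'m^'n)
    \<Rightarrow> (nat \<Rightarrow> nat \<Rightarrow> real^'n^'n) \<Rightarrow> (nat \<Rightarrow> nat \<Rightarrow> real^'m^'m) \<Rightarrow> (nat \<Rightarrow> real^'n^'n)
    \<Rightarrow> (nat \<Rightarrow> 'a \<Rightarrow> real) \<Rightarrow> nat \<Rightarrow> nat \<Rightarrow> ('a \<Rightarrow> real^'n) \<Rightarrow> (nat \<Rightarrow> 'a \<Rightarrow> real^'m) \<Rightarrow> real" where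
  "Jcost M A B C D Q R G w N t y u =
     (let X = traj (A t) (B t) (C t) (D t) w t y u in
      (\<Sum>k=t..<N. (\<integral>\<omega>. X k \<omega> \<bullet> (Q t k *v X k \<omega>) + u k \<omega> \<bullet> (R t k *v u k \<omega>) \<partial>M))
      + (\<integral>\<omega>. X N \<omega> \<bullet> (G t *v X N \<omega>) \<partial>M))"

definition eqstate :: "(nat \<Rightarrow> nat \<Rightarrow> real^'n^'n) \<Rightarrow> (nat \<Rightarrow> nat \<Rightarrow> real^'m^'n)
    \<Rightarrow> (nat \<Rightarrow> nat \<Rightarrow> real^'n^'n) \<Rightarrow> (nat \<Rightarrow> nat \<Rightarrow> real^'m^'n)
    \<Rightarrow> (nat \<Rightarrow> 'a \<Rightarrow> real) \<Rightarrow> nat \<Rightarrow> ('a \<Rightarrow> real^'n) \<Rightarrow> (nat \<Rightarrow> 'a \<Rightarrow> real^'m) \<Rightarrow> nat \<Rightarrow> 'a \<Rightarrow> real^'n" where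
  "eqstate A B C D w t x u = traj (\<lambda>k. A k k) (\<lambda>k. B k k) (\<lambda>k. C k k) (\<lambda>k. D k k) w t x u"

text \<open>Open-loop equilibrium control for the initial pair (t,x).  The perturbed control
  (u_k, u*|T_{k+1}) is u*(k := ubar); J(k,.,.) only uses the control on T_k.\<close>
definition open_loop_equilibrium where
  "open_loop_equilibrium M x0 A B C D Q R G w N t x u \<longleftrightarrow>
     u \<in> L2proc M x0 w N t \<and>
     (\<forall>k\<in>{t..<N}. \<forall>ubar\<in>L2k M x0 w k.
        Jcost M A B C D Q R G w N k (eqstate A B C D w t x u k) u
          \<le> Jcost M A B C D Q R G w N k (eqstate A B C D w t x u k) (u(k := ubar)))"

definition cond_ii where
  "cond_ii M x0 A B C D Q R G w N t x u \<longleftrightarrow>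
     u \<in> L2proc M x0 w N t \<and>
     (\<forall>k\<in>{t..<N}.
        (let Xk = traj (A k) (B k) (C k) (D k) w k (eqstate A B C D w t x u k) u;
             F = Fprev M x0 w in
         (\<exists>Z :: nat \<Rightarrow> _ \<Rightarrow> real^_.
            (\<forall>l\<in>{k..N}. Z l \<in> borel_measurable M \<and> integrable M (\<lambda>\<omega>. (norm (Z l \<omega>))\<^sup>2)) \<and>
            (\<forall>l\<in>{k..<N}. AE \<omega> in M. Z l \<omega> =
                 transpose (A k l) *v cexp M (F l) (Z (Suc l)) \<omega>
               + transpose (C k l) *v cexp M (F l) (\<lambda>\<eta>. w l \<eta> *\<^sub>R Z (Suc l) \<eta>) \<omega>
               + Q k l *v Xk l \<omega>) \<and>
            (AE \<omega> in M. Z N \<omega> = G k *v Xk N \<omega>) \<and>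
            (AE \<omega> in M. 0 = R k k *v u k \<omega>
               + transpose (B k k) *v cexp M (F k) (Z (Suc k)) \<omega>
               + transpose (D k k) *v cexp M (F k) (\<lambda>\<eta>. w k \<eta> *\<^sub>R Z (Suc k) \<eta>) \<omega>))
         \<and>
         (INF ubar\<in>L2k M x0 w k.
            (let Y = traj (A k) (B k) (C k) (D k) w k (\<lambda>\<omega>. 0) (\<lambda>l. if l = k then ubar else (\<lambda>\<omega>. 0)) in
             ereal ((\<Sum>l=k..<N. (\<integral>\<omega>. Y l \<omega> \<bullet> (Q k l *v Y l \<omega>) \<partial>M))
                    + (\<integral>\<omega>. ubar \<omega> \<bullet> (R k k *v ubar \<omega>) \<partial>M)
                    + (\<integral>\<omega>. Y N \<omega> \<bullet> (G k *v Y N \<omega>) \<partial>M)))) \<ge> 0))"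

end

theory Submission
  imports Defs
begin

text \<open>Fix \<open>k\<close> and perturb the control at time \<open>k\<close> only, \<open>u\<^sub>k \<mapsto> u\<^sub>k + v\<close>. The state is affine
  in the initial value and the control, so the perturbed state is \<open>X + Y\<close>, where \<open>Y\<close> is the response
  to the pulse \<open>v\<close> started from \<open>0\<close>, and the cost splits as \<open>J(u) + 2 B(Y, v; X, u) + \<Phi>(v)\<close> with
  \<open>\<Phi>\<close> the functional of the convexity condition. Along a solution \<open>Z\<close> of the adjoint equation the
  cross term \<open>B\<close> telescopes, by self-adjointness of conditional expectation, to \<open>E[v \<bullet> \<Lambda>]\<close>, where
  \<open>\<Lambda>\<close> is the right-hand side of the stationarity condition. So \<open>u\<close> is an equilibrium at time \<open>k\<close>
  iff \<open>2r E[v \<bullet> \<Lambda>] + r\<^sup>2 \<Phi>(v) \<ge> 0\<close> for all real \<open>r\<close> and all admissible \<open>v\<close>, i.e. iff \<open>\<Lambda> = 0\<close>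
  almost surely and \<open>\<Phi> \<ge> 0\<close>. The adjoint equation is always solvable by backward recursion; its
  conditional expectations stay square integrable because \<open>E[w\<^sub>k\<^sup>2 | F\<^sub>k\<^sub>-\<^sub>1] = 1\<close>.\<close>

section \<open>Random vectors and quadratic forms\<close>

lemma borel_measurable_vec_componentwise:
  fixes f :: "'a \<Rightarrow> real^'n"
  assumes "\<And>i. (\<lambda>x. f x $ i) \<in> borel_measurable M"
  shows "f \<in> borel_measurable M"
proof -
  have "(\<lambda>x. f x \<bullet> b) \<in> borel_measurable M" if "b \<in> Basis" for b :: "real^'n"
  proof -
    from that obtain i where "b = axis i 1" by (auto simp: Basis_vec_def)
    then show ?thesis using assms[of i] by (simp add: inner_axis)
  qed
  then show ?thesis using borel_measurable_euclidean_space[of f M] by blast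
qed

lemma borel_measurable_bounded_linear:
  assumes "bounded_linear L" "f \<in> borel_measurable M"
  shows "(\<lambda>x. L (f x)) \<in> borel_measurable M"
  using measurable_compose[OF assms(2) borel_measurable_continuous_onI[OF linear_continuous_on[OF assms(1)]]] .

lemma borel_measurable_matrix_vector_mult [measurable (raw)]:
  fixes A :: "real^'n^'m"
  shows "f \<in> borel_measurable M \<Longrightarrow> (\<lambda>x. A *v f x) \<in> borel_measurable M"
  by (rule borel_measurable_bounded_linear[OF matrix_vector_mul_bounded_linear])

lemma inner_transpose_mult: "(x::real^'n) \<bullet> (transpose A *v z) = (A *v x) \<bullet> z"
proof -
  have "x \<bullet> (transpose A *v z) = x \<bullet> (z v* A)" by simp
  also have "\<dots> = (z v* A) \<bullet> x" by (rule inner_commute)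
  also have "\<dots> = z \<bullet> (A *v x)" by (rule dot_lmul_matrix)
  also have "\<dots> = (A *v x) \<bullet> z" by (rule inner_commute)
  finally show ?thesis .
qed

lemma quadratic_form_add:
  assumes "transpose S = S"
  shows "((x::real^'n) + y) \<bullet> (S *v (x + y)) = x \<bullet> (S *v x) + 2 * (y \<bullet> (S *v x)) + y \<bullet> (S *v y)"
  using inner_transpose_mult[of x S y] assms
  by (simp add: matrix_vector_right_distrib inner_add_left inner_add_right inner_commute)

lemma quadratic_nonneg_iff:
  fixes a b :: real
  shows "(\<forall>r. 0 \<le> 2 * r * a + r\<^sup>2 * b) \<longleftrightarrow> a = 0 \<and> 0 \<le> b"
proof
  assume H: "\<forall>r. 0 \<le> 2 * r * a + r\<^sup>2 * b"
  have b: "0 \<le> b" using H[rule_format, of 1] H[rule_format, of "-1"] by simp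
  moreover have "a = 0"
  proof (rule ccontr)
    assume "a \<noteq> 0"
    define r where "r = - a / (b + 1)"
    have rb: "r * (b + 1) = - a" unfolding r_def using b by simp
    have "(b + 1)\<^sup>2 * (2 * r * a + r\<^sup>2 * b) = 2 * a * (r * (b + 1)) * (b + 1) + (r * (b + 1))\<^sup>2 * b"
      by (simp add: power2_eq_square algebra_simps)
    also have "\<dots> = - (a\<^sup>2 * (b + 2))" unfolding rb by (simp add: power2_eq_square algebra_simps)
    finally have "(b + 1)\<^sup>2 * (2 * r * a + r\<^sup>2 * b) = - (a\<^sup>2 * (b + 2))" .
    moreover have "0 < a\<^sup>2 * (b + 2)" using \<open>a \<noteq> 0\<close> b by simp
    moreover have "0 \<le> (b + 1)\<^sup>2 * (2 * r * a + r\<^sup>2 * b)" using H by simp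
    ultimately show False by linarith
  qed
  ultimately show "a = 0 \<and> 0 \<le> b" by simp
qed simp

text \<open>Used pointwise almost everywhere: the rationals are countable, so quantifying over them
  commutes with \<open>AE\<close>.\<close>
lemma square_le_of_rat_quadratic_nonneg:
  fixes b c :: real
  assumes H: "\<forall>q\<in>\<rat>. 0 \<le> c - 2 * q * b + q\<^sup>2"
  shows "b\<^sup>2 \<le> c"
proof (rule ccontr)
  assume "\<not> b\<^sup>2 \<le> c"
  define d where "d = b\<^sup>2 - c"
  have d: "d > 0" using \<open>\<not> b\<^sup>2 \<le> c\<close> unfolding d_def by simp
  obtain q where q: "q \<in> \<rat>" "b < q" "q < b + min 1 d"
    using Rats_dense_in_real[of b "b + min 1 d"] d by auto
  have "(q - b)\<^sup>2 \<le> q - b"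
    using q by (simp add: power2_eq_square mult_le_cancel_right1)
  also have "\<dots> < d" using q by simp
  finally have "c - 2 * q * b + q\<^sup>2 < 0"
    unfolding d_def by (simp add: power2_eq_square algebra_simps)
  with H q(1) show False by fastforce
qed

section \<open>Square-integrable random vectors\<close>

lemma mult_le_add_squares:
  fixes x y :: real
  assumes "0 \<le> x" "0 \<le> y"
  shows "x * y \<le> x\<^sup>2 + y\<^sup>2"
proof -
  have "x\<^sup>2 + y\<^sup>2 - x * y = (x - y)\<^sup>2 + x * y" by (simp add: power2_eq_square algebra_simps)
  moreover have "0 \<le> x * y" using assms by simp
  ultimately show ?thesis using zero_le_power2[of "x - y"] by linarith
qed

definition square_integrable :: "'a measure \<Rightarrow> ('a \<Rightarrow> 'b::euclidean_space) \<Rightarrow> bool" where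
  "square_integrable M f \<longleftrightarrow> f \<in> borel_measurable M \<and> integrable M (\<lambda>\<omega>. (norm (f \<omega>))\<^sup>2)"

lemma square_integrable_real_iff:
  "square_integrable M (f :: 'a \<Rightarrow> real) \<longleftrightarrow> f \<in> borel_measurable M \<and> integrable M (\<lambda>\<omega>. (f \<omega>)\<^sup>2)"
  by (simp add: square_integrable_def)

lemma square_integrable_zero: "square_integrable M (\<lambda>\<omega>. 0)"
  by (simp add: square_integrable_def)

lemma square_integrable_add:
  assumes f: "square_integrable M f" and g: "square_integrable M g"
  shows "square_integrable M (\<lambda>\<omega>. f \<omega> + g \<omega>)"
  unfolding square_integrable_def
proof
  have [measurable]: "f \<in> borel_measurable M" "g \<in> borel_measurable M"
    using f g by (simp_all add: square_integrable_def)
  show "(\<lambda>\<omega>. f \<omega> + g \<omega>) \<in> borel_measurable M" by measurable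
  have "(norm (f \<omega> + g \<omega>))\<^sup>2 \<le> 2 * (norm (f \<omega>))\<^sup>2 + 2 * (norm (g \<omega>))\<^sup>2" for \<omega>
  proof -
    have "(norm (f \<omega> + g \<omega>))\<^sup>2 \<le> (norm (f \<omega>) + norm (g \<omega>))\<^sup>2"
      by (simp add: norm_triangle_ineq power_mono)
    also have "\<dots> \<le> 2 * (norm (f \<omega>))\<^sup>2 + 2 * (norm (g \<omega>))\<^sup>2"
      using sum_power2_ge_zero[of "norm (f \<omega>) - norm (g \<omega>)" 0]
      by (simp add: power2_eq_square algebra_simps)
    finally show ?thesis .
  qed
  then have bound: "AE \<omega> in M. norm ((norm (f \<omega> + g \<omega>))\<^sup>2) \<le> norm (2 * (norm (f \<omega>))\<^sup>2 + 2 * (norm (g \<omega>))\<^sup>2)"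
    by (auto intro!: AE_I2)
  have int: "integrable M (\<lambda>\<omega>. 2 * (norm (f \<omega>))\<^sup>2 + 2 * (norm (g \<omega>))\<^sup>2)"
    using f g by (simp add: square_integrable_def)
  have meas: "(\<lambda>\<omega>. (norm (f \<omega> + g \<omega>))\<^sup>2) \<in> borel_measurable M" by measurable
  show "integrable M (\<lambda>\<omega>. (norm (f \<omega> + g \<omega>))\<^sup>2)"
    by (rule Bochner_Integration.integrable_bound[OF int meas bound])
qed

lemma square_integrable_bounded_linear:
  assumes L: "bounded_linear L" and f: "square_integrable M f"
  shows "square_integrable M (\<lambda>\<omega>. L (f \<omega>))"
  unfolding square_integrable_def
proof
  have fm: "f \<in> borel_measurable M" using f by (simp add: square_integrable_def)
  show Lm: "(\<lambda>\<omega>. L (f \<omega>)) \<in> borel_measurable M"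
    by (rule borel_measurable_bounded_linear[OF L fm])
  obtain K where K: "\<And>x. norm (L x) \<le> norm x * K"
    using bounded_linear.bounded[OF L] by (auto simp: mult.commute)
  have "(norm (L (f \<omega>)))\<^sup>2 \<le> K\<^sup>2 * (norm (f \<omega>))\<^sup>2" for \<omega>
    using power_mono[OF K[of "f \<omega>"] norm_ge_zero] by (simp add: power_mult_distrib mult.commute)
  then have bound: "AE \<omega> in M. norm ((norm (L (f \<omega>)))\<^sup>2) \<le> norm (K\<^sup>2 * (norm (f \<omega>))\<^sup>2)"
    by (auto intro!: AE_I2)
  have int: "integrable M (\<lambda>\<omega>. K\<^sup>2 * (norm (f \<omega>))\<^sup>2)"
    using f by (simp add: square_integrable_def)
  have meas: "(\<lambda>\<omega>. (norm (L (f \<omega>)))\<^sup>2) \<in> borel_measurable M" using Lm by measurable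
  show "integrable M (\<lambda>\<omega>. (norm (L (f \<omega>)))\<^sup>2)"
    by (rule Bochner_Integration.integrable_bound[OF int meas bound])
qed

lemma square_integrable_matrix_vector_mult:
  "square_integrable M f \<Longrightarrow> square_integrable M (\<lambda>\<omega>. (A::real^'n^'m) *v f \<omega>)"
  by (rule square_integrable_bounded_linear[OF matrix_vector_mul_bounded_linear])

lemma square_integrable_scaleR:
  "square_integrable M f \<Longrightarrow> square_integrable M (\<lambda>\<omega>. c *\<^sub>R f \<omega>)"
  by (rule square_integrable_bounded_linear[OF bounded_linear_scaleR_right])

lemma square_integrable_diff:
  "square_integrable M f \<Longrightarrow> square_integrable M g \<Longrightarrow> square_integrable M (\<lambda>\<omega>. f \<omega> - g \<omega>)"
  using square_integrable_add[of M f "\<lambda>\<omega>. (-1) *\<^sub>R g \<omega>"] square_integrable_scaleR[of M g "-1"]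
  by simp

lemma square_integrable_vec_nth:
  "square_integrable M (f :: 'a \<Rightarrow> real^'n) \<Longrightarrow> square_integrable M (\<lambda>\<omega>. f \<omega> $ i)"
  by (rule square_integrable_bounded_linear[OF bounded_linear_vec_nth])

lemma square_integrable_vec_componentwise:
  fixes f :: "'a \<Rightarrow> real^'n"
  assumes "\<And>i. square_integrable M (\<lambda>\<omega>. f \<omega> $ i)"
  shows "square_integrable M f"
proof -
  have "(norm (f \<omega>))\<^sup>2 = (\<Sum>i\<in>UNIV. (f \<omega> $ i)\<^sup>2)" for \<omega>
    by (simp only: power2_norm_eq_inner) (simp add: inner_vec_def power2_eq_square)
  then show ?thesis
    using assms by (auto simp: square_integrable_def intro: borel_measurable_vec_componentwise)
qed

lemma integrable_inner_square_integrable: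
  assumes f: "square_integrable M f" and g: "square_integrable M g"
  shows "integrable M (\<lambda>\<omega>. f \<omega> \<bullet> g \<omega>)"
proof (rule Bochner_Integration.integrable_bound)
  show "integrable M (\<lambda>\<omega>. (norm (f \<omega>))\<^sup>2 + (norm (g \<omega>))\<^sup>2)"
    using f g by (simp add: square_integrable_def)
  have [measurable]: "f \<in> borel_measurable M" "g \<in> borel_measurable M"
    using f g by (simp_all add: square_integrable_def)
  show "(\<lambda>\<omega>. f \<omega> \<bullet> g \<omega>) \<in> borel_measurable M" by measurable
  have "\<bar>f \<omega> \<bullet> g \<omega>\<bar> \<le> (norm (f \<omega>))\<^sup>2 + (norm (g \<omega>))\<^sup>2" for \<omega>
  proof -
    have "\<bar>f \<omega> \<bullet> g \<omega>\<bar> \<le> norm (f \<omega>) * norm (g \<omega>)" by (rule Cauchy_Schwarz_ineq2)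
    also have "\<dots> \<le> (norm (f \<omega>))\<^sup>2 + (norm (g \<omega>))\<^sup>2"
      by (simp add: mult_le_add_squares)
    finally show ?thesis .
  qed
  then show "AE \<omega> in M. norm (f \<omega> \<bullet> g \<omega>) \<le> norm ((norm (f \<omega>))\<^sup>2 + (norm (g \<omega>))\<^sup>2)"
    by (auto intro!: AE_I2)
qed

lemma integrable_inner_matrix_vector_mult:
  fixes S :: "real^'n^'m"
  assumes "square_integrable M f" "square_integrable M g"
  shows "integrable M (\<lambda>\<omega>. f \<omega> \<bullet> (S *v g \<omega>))"
  using integrable_inner_square_integrable[OF assms(1) square_integrable_matrix_vector_mult[OF assms(2)]] .

lemma integrable_vec_nth_mult:
  "square_integrable M (f :: 'a \<Rightarrow> real^'n) \<Longrightarrow> square_integrable M g \<Longrightarrow>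
    integrable M (\<lambda>\<omega>. f \<omega> $ i * g \<omega> $ i)"
  using integrable_inner_square_integrable[OF square_integrable_vec_nth square_integrable_vec_nth]
  by simp

section \<open>Conditional expectation of random vectors\<close>

lemma cexp_vec_nth [simp]: "cexp M F Z \<omega> $ i = real_cond_exp M F (\<lambda>\<eta>. Z \<eta> $ i) \<omega>"
  by (simp add: cexp_def)

lemma borel_measurable_cexp: "cexp M F Z \<in> borel_measurable F"
  by (rule borel_measurable_vec_componentwise) simp

context finite_measure_subalgebra
begin

lemma real_cond_exp_square_eq_one_imp_ennreal:
  assumes "AE \<omega> in M. real_cond_exp M F (\<lambda>\<omega>. (g \<omega>)\<^sup>2) \<omega> = 1"
  shows "AE \<omega> in M. nn_cond_exp M F (\<lambda>\<omega>. ennreal ((g \<omega>)\<^sup>2)) \<omega> = 1"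
proof -
  have neg: "(\<lambda>\<omega>. ennreal (- (g \<omega>)\<^sup>2)) = (\<lambda>\<omega>. 0)"
    by (rule ext) (simp add: ennreal_neg)
  have "AE \<omega> in M. 0 = nn_cond_exp M F (\<lambda>\<omega>. 0) \<omega>"
    by (rule nn_cond_exp_F_meas) simp
  with assms show ?thesis
    unfolding real_cond_exp_def neg
    by eventually_elim (auto simp: enn2real_eq_posreal_iff)
qed

lemma square_integrable_scaleR_unit_cond_variance:
  assumes fF: "f \<in> borel_measurable F" and f: "square_integrable M f"
    and g: "g \<in> borel_measurable M"
    and g1: "AE \<omega> in M. real_cond_exp M F (\<lambda>\<omega>. (g \<omega>)\<^sup>2) \<omega> = 1"
  shows "square_integrable M (\<lambda>\<omega>. g \<omega> *\<^sub>R f \<omega>)"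
  unfolding square_integrable_def
proof
  have [measurable]: "f \<in> borel_measurable F" "g \<in> borel_measurable M"
    and fM: "f \<in> borel_measurable M"
    using fF g f by (simp_all add: square_integrable_def)
  show "(\<lambda>\<omega>. g \<omega> *\<^sub>R f \<omega>) \<in> borel_measurable M" using fM by measurable
  have meas: "(\<lambda>\<omega>. (norm (g \<omega> *\<^sub>R f \<omega>))\<^sup>2) \<in> borel_measurable M" using fM by measurable
  have "(\<integral>\<^sup>+\<omega>. ennreal ((norm (g \<omega> *\<^sub>R f \<omega>))\<^sup>2) \<partial>M)
      = (\<integral>\<^sup>+\<omega>. ennreal ((norm (f \<omega>))\<^sup>2) * ennreal ((g \<omega>)\<^sup>2) \<partial>M)"
    by (intro nn_integral_cong) (simp add: power_mult_distrib ennreal_mult mult.commute)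
  also have "\<dots> = (\<integral>\<^sup>+\<omega>. ennreal ((norm (f \<omega>))\<^sup>2) * nn_cond_exp M F (\<lambda>\<omega>. ennreal ((g \<omega>)\<^sup>2)) \<omega> \<partial>M)"
    by (intro nn_cond_exp_intg[symmetric]) measurable
  also have "\<dots> = (\<integral>\<^sup>+\<omega>. ennreal ((norm (f \<omega>))\<^sup>2) \<partial>M)"
    using real_cond_exp_square_eq_one_imp_ennreal[OF g1]
    by (intro nn_integral_cong_AE) auto
  also have "\<dots> = ennreal (\<integral>\<omega>. (norm (f \<omega>))\<^sup>2 \<partial>M)"
    using f by (intro nn_integral_eq_integral) (auto simp: square_integrable_def)
  finally have "(\<integral>\<^sup>+\<omega>. ennreal ((norm (g \<omega> *\<^sub>R f \<omega>))\<^sup>2) \<partial>M) < \<infinity>" by simp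
  then show "integrable M (\<lambda>\<omega>. (norm (g \<omega> *\<^sub>R f \<omega>))\<^sup>2)"
    by (rule integrableI_nonneg[OF meas, rotated]) simp
qed

text \<open>Conditional Cauchy--Schwarz, read off from
  \<open>0 \<le> E[(f - qg)\<^sup>2|F] = E[f\<^sup>2|F] - 2q E[gf|F] + q\<^sup>2\<close> for rational \<open>q\<close>.\<close>
lemma real_cond_exp_mult_square_le:
  fixes g f :: "'a \<Rightarrow> real"
  assumes g: "square_integrable M g"
    and g1: "AE \<omega> in M. real_cond_exp M F (\<lambda>\<omega>. (g \<omega>)\<^sup>2) \<omega> = 1"
    and f: "square_integrable M f"
  shows "AE \<omega> in M. (real_cond_exp M F (\<lambda>\<omega>. g \<omega> * f \<omega>) \<omega>)\<^sup>2 \<le> real_cond_exp M F (\<lambda>\<omega>. (f \<omega>)\<^sup>2) \<omega>"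
proof -
  have [measurable]: "g \<in> borel_measurable M" "f \<in> borel_measurable M"
    and g2: "integrable M (\<lambda>\<omega>. (g \<omega>)\<^sup>2)" and f2: "integrable M (\<lambda>\<omega>. (f \<omega>)\<^sup>2)"
    using g f by (simp_all add: square_integrable_real_iff)
  have gf: "integrable M (\<lambda>\<omega>. g \<omega> * f \<omega>)"
    using integrable_inner_square_integrable[OF g f] by simp
  define b where "b = real_cond_exp M F (\<lambda>\<omega>. g \<omega> * f \<omega>)"
  define c where "c = real_cond_exp M F (\<lambda>\<omega>. (f \<omega>)\<^sup>2)"
  have "AE \<omega> in M. 0 \<le> c \<omega> - 2 * q * b \<omega> + q\<^sup>2" for q :: real
  proof -
    have "(f \<omega>)\<^sup>2 - 2 * q * (g \<omega> * f \<omega>) + q\<^sup>2 * (g \<omega>)\<^sup>2 = (f \<omega> - q * g \<omega>)\<^sup>2" for \<omega>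
      by (simp add: power2_eq_square algebra_simps)
    then have "AE \<omega> in M. 0 \<le> real_cond_exp M F (\<lambda>\<omega>. (f \<omega>)\<^sup>2 - 2 * q * (g \<omega> * f \<omega>) + q\<^sup>2 * (g \<omega>)\<^sup>2) \<omega>"
      by (intro real_cond_exp_pos AE_I2) (simp_all, measurable)
    moreover have "AE \<omega> in M. real_cond_exp M F (\<lambda>\<omega>. (f \<omega>)\<^sup>2 - 2 * q * (g \<omega> * f \<omega>) + q\<^sup>2 * (g \<omega>)\<^sup>2) \<omega>
        = real_cond_exp M F (\<lambda>\<omega>. (f \<omega>)\<^sup>2 - 2 * q * (g \<omega> * f \<omega>)) \<omega>
          + real_cond_exp M F (\<lambda>\<omega>. q\<^sup>2 * (g \<omega>)\<^sup>2) \<omega>"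
      using f2 gf g2 by (intro real_cond_exp_add) auto
    moreover have "AE \<omega> in M. real_cond_exp M F (\<lambda>\<omega>. (f \<omega>)\<^sup>2 - 2 * q * (g \<omega> * f \<omega>)) \<omega>
        = c \<omega> - real_cond_exp M F (\<lambda>\<omega>. 2 * q * (g \<omega> * f \<omega>)) \<omega>"
      unfolding c_def using gf by (intro real_cond_exp_diff f2) auto
    moreover have "AE \<omega> in M. real_cond_exp M F (\<lambda>\<omega>. 2 * q * (g \<omega> * f \<omega>)) \<omega> = 2 * q * b \<omega>"
      unfolding b_def by (rule real_cond_exp_cmult[OF gf])
    moreover have "AE \<omega> in M. real_cond_exp M F (\<lambda>\<omega>. q\<^sup>2 * (g \<omega>)\<^sup>2) \<omega>
        = q\<^sup>2 * real_cond_exp M F (\<lambda>\<omega>. (g \<omega>)\<^sup>2) \<omega>"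
      by (rule real_cond_exp_cmult[OF g2])
    ultimately show ?thesis using g1 by eventually_elim simp
  qed
  then have "AE \<omega> in M. \<forall>q\<in>\<rat>. 0 \<le> c \<omega> - 2 * q * b \<omega> + q\<^sup>2"
    by (subst AE_ball_countable[OF countable_rat]) blast
  then show ?thesis
    unfolding b_def[symmetric] c_def[symmetric]
    by eventually_elim (rule square_le_of_rat_quadratic_nonneg)
qed

lemma square_integrable_real_cond_exp_mult:
  fixes g f :: "'a \<Rightarrow> real"
  assumes g: "square_integrable M g"
    and g1: "AE \<omega> in M. real_cond_exp M F (\<lambda>\<omega>. (g \<omega>)\<^sup>2) \<omega> = 1"
    and f: "square_integrable M f"
  shows "square_integrable M (real_cond_exp M F (\<lambda>\<omega>. g \<omega> * f \<omega>))"
proof -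
  have "integrable M (\<lambda>\<omega>. (real_cond_exp M F (\<lambda>\<omega>. g \<omega> * f \<omega>) \<omega>)\<^sup>2)"
  proof (rule Bochner_Integration.integrable_bound)
    show "integrable M (real_cond_exp M F (\<lambda>\<omega>. (f \<omega>)\<^sup>2))"
      using f by (intro real_cond_exp_int(1)) (simp add: square_integrable_real_iff)
    show "(\<lambda>\<omega>. (real_cond_exp M F (\<lambda>\<omega>. g \<omega> * f \<omega>) \<omega>)\<^sup>2) \<in> borel_measurable M"
      by measurable
    show "AE \<omega> in M. norm ((real_cond_exp M F (\<lambda>\<omega>. g \<omega> * f \<omega>) \<omega>)\<^sup>2)
        \<le> norm (real_cond_exp M F (\<lambda>\<omega>. (f \<omega>)\<^sup>2) \<omega>)"
      using real_cond_exp_mult_square_le[OF g g1 f] by eventually_elim simp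
  qed
  then show ?thesis by (simp add: square_integrable_real_iff)
qed

lemma square_integrable_cexp_scaleR:
  fixes Z :: "'a \<Rightarrow> real^'n"
  assumes Z: "square_integrable M Z" and g: "square_integrable M g"
    and g1: "AE \<omega> in M. real_cond_exp M F (\<lambda>\<omega>. (g \<omega>)\<^sup>2) \<omega> = 1"
  shows "square_integrable M (cexp M F (\<lambda>\<eta>. g \<eta> *\<^sub>R Z \<eta>))"
  using square_integrable_real_cond_exp_mult[OF g g1 square_integrable_vec_nth[OF Z]]
  by (intro square_integrable_vec_componentwise) simp

lemma square_integrable_cexp:
  fixes Z :: "'a \<Rightarrow> real^'n"
  assumes "square_integrable M Z"
  shows "square_integrable M (cexp M F Z)"
proof -
  have "AE \<omega> in M. real_cond_exp M F (\<lambda>_. 1) \<omega> = 1"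
    by (rule real_cond_exp_F_meas) auto
  then show ?thesis
    using square_integrable_cexp_scaleR[OF assms, of "\<lambda>_. 1"] by (simp add: square_integrable_def)
qed

lemma integral_inner_cexp:
  fixes Z V :: "'a \<Rightarrow> real^'n"
  assumes V: "V \<in> borel_measurable F" and Z: "Z \<in> borel_measurable M"
    and VZ: "\<And>i. integrable M (\<lambda>\<omega>. V \<omega> $ i * Z \<omega> $ i)"
  shows "(\<integral>\<omega>. V \<omega> \<bullet> cexp M F Z \<omega> \<partial>M) = (\<integral>\<omega>. V \<omega> \<bullet> Z \<omega> \<partial>M)"
proof -
  have "(\<lambda>\<omega>. V \<omega> $ i) \<in> borel_measurable F" "(\<lambda>\<omega>. Z \<omega> $ i) \<in> borel_measurable M" for i
    using V Z by (auto intro: borel_measurable_bounded_linear[OF bounded_linear_vec_nth])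
  note cond = real_cond_exp_intg[OF VZ this]
  have "(\<integral>\<omega>. V \<omega> \<bullet> cexp M F Z \<omega> \<partial>M)
      = (\<integral>\<omega>. (\<Sum>i\<in>UNIV. V \<omega> $ i * real_cond_exp M F (\<lambda>\<eta>. Z \<eta> $ i) \<omega>) \<partial>M)"
    by (simp add: inner_vec_def)
  also have "\<dots> = (\<Sum>i\<in>UNIV. (\<integral>\<omega>. V \<omega> $ i * real_cond_exp M F (\<lambda>\<eta>. Z \<eta> $ i) \<omega> \<partial>M))"
    using cond(1) by simp
  also have "\<dots> = (\<Sum>i\<in>UNIV. (\<integral>\<omega>. V \<omega> $ i * Z \<omega> $ i \<partial>M))"
    by (simp only: cond(2))
  also have "\<dots> = (\<integral>\<omega>. (\<Sum>i\<in>UNIV. V \<omega> $ i * Z \<omega> $ i) \<partial>M)"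
    using VZ by simp
  also have "\<dots> = (\<integral>\<omega>. V \<omega> \<bullet> Z \<omega> \<partial>M)"
    by (simp add: inner_vec_def)
  finally show ?thesis .
qed

end

section \<open>Trajectories and quadratic cost forms\<close>

lemma traj_start [simp]: "traj a b c d w s y u s = y"
  by (simp add: traj_def)

lemma traj_Suc:
  "s \<le> l \<Longrightarrow> traj a b c d w s y u (Suc l) = (\<lambda>\<omega>. a l *v traj a b c d w s y u l \<omega> + b l *v u l \<omega>
     + w l \<omega> *\<^sub>R (c l *v traj a b c d w s y u l \<omega> + d l *v u l \<omega>))"
  by (simp add: traj_def Suc_diff_le)

lemma traj_add:
  "traj a b c d w s (\<lambda>\<omega>. y1 \<omega> + y2 \<omega>) (\<lambda>l \<omega>. u1 l \<omega> + u2 l \<omega>) l \<omega>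
   = traj a b c d w s y1 u1 l \<omega> + traj a b c d w s y2 u2 l \<omega>"
proof -
  have "traj_aux a b c d w s (\<lambda>\<omega>. y1 \<omega> + y2 \<omega>) (\<lambda>l \<omega>. u1 l \<omega> + u2 l \<omega>) i \<omega>
      = traj_aux a b c d w s y1 u1 i \<omega> + traj_aux a b c d w s y2 u2 i \<omega>" for i
    by (induction i arbitrary: \<omega>)
      (simp_all add: algebra_simps)
  then show ?thesis unfolding traj_def .
qed

lemma traj_scaleR:
  "traj a b c d w s (\<lambda>\<omega>. r *\<^sub>R y \<omega>) (\<lambda>l \<omega>. r *\<^sub>R u l \<omega>) l \<omega> = r *\<^sub>R traj a b c d w s y u l \<omega>"
proof -
  have "traj_aux a b c d w s (\<lambda>\<omega>. r *\<^sub>R y \<omega>) (\<lambda>l \<omega>. r *\<^sub>R u l \<omega>) i \<omega>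
      = r *\<^sub>R traj_aux a b c d w s y u i \<omega>" for i
    by (induction i arbitrary: \<omega>)
      (simp_all add: algebra_simps)
  then show ?thesis unfolding traj_def .
qed

definition pulse :: "nat \<Rightarrow> ('a \<Rightarrow> 'b::zero) \<Rightarrow> nat \<Rightarrow> 'a \<Rightarrow> 'b" where
  "pulse k v = (\<lambda>l. if l = k then v else (\<lambda>\<omega>. 0))"

lemma fun_upd_eq_add_pulse:
  fixes u :: "nat \<Rightarrow> 'a \<Rightarrow> 'b::monoid_add"
  shows "u(k := (\<lambda>\<omega>. u k \<omega> + v \<omega>)) = (\<lambda>l \<omega>. u l \<omega> + pulse k v l \<omega>)"
  by (auto simp: pulse_def fun_eq_iff)

lemma pulse_scaleR:
  fixes v :: "'a \<Rightarrow> 'b::real_vector"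
  shows "pulse k (\<lambda>\<omega>. r *\<^sub>R v \<omega>) = (\<lambda>l \<omega>. r *\<^sub>R pulse k v l \<omega>)"
  by (auto simp: pulse_def fun_eq_iff)

definition cost_form :: "'a measure \<Rightarrow> (nat \<Rightarrow> real^'n^'n) \<Rightarrow> (nat \<Rightarrow> real^'m^'m) \<Rightarrow> real^'n^'n
    \<Rightarrow> nat \<Rightarrow> nat \<Rightarrow> (nat \<Rightarrow> 'a \<Rightarrow> real^'n) \<Rightarrow> (nat \<Rightarrow> 'a \<Rightarrow> real^'m)
    \<Rightarrow> (nat \<Rightarrow> 'a \<Rightarrow> real^'n) \<Rightarrow> (nat \<Rightarrow> 'a \<Rightarrow> real^'m) \<Rightarrow> real" where
  "cost_form M q r g N k X u Y v =
     (\<Sum>l=k..<N. (\<integral>\<omega>. X l \<omega> \<bullet> (q l *v Y l \<omega>) + u l \<omega> \<bullet> (r l *v v l \<omega>) \<partial>M))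
     + (\<integral>\<omega>. X N \<omega> \<bullet> (g *v Y N \<omega>) \<partial>M)"

lemma Jcost_eq_cost_form:
  "Jcost M A B C D Q R G w N k y u = cost_form M (Q k) (R k) (G k) N k X u X u"
  if "X = traj (A k) (B k) (C k) (D k) w k y u"
  by (simp add: that Jcost_def cost_form_def Let_def)

lemma cost_form_scaleR:
  "cost_form M q r g N k (\<lambda>l \<omega>. s *\<^sub>R X l \<omega>) (\<lambda>l \<omega>. s *\<^sub>R u l \<omega>) (\<lambda>l \<omega>. s *\<^sub>R X l \<omega>) (\<lambda>l \<omega>. s *\<^sub>R u l \<omega>)
    = s\<^sup>2 * cost_form M q r g N k X u X u"
proof -
  have stage: "(s *\<^sub>R X l \<omega>) \<bullet> (q l *v (s *\<^sub>R X l \<omega>)) + (s *\<^sub>R u l \<omega>) \<bullet> (r l *v (s *\<^sub>R u l \<omega>))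
      = s\<^sup>2 * (X l \<omega> \<bullet> (q l *v X l \<omega>) + u l \<omega> \<bullet> (r l *v u l \<omega>))" for l \<omega>
    by (simp add: power2_eq_square algebra_simps)
  have terminal: "(s *\<^sub>R X N \<omega>) \<bullet> (g *v (s *\<^sub>R X N \<omega>)) = s\<^sup>2 * (X N \<omega> \<bullet> (g *v X N \<omega>))" for \<omega>
    by (simp add: matrix_vector_mult_scaleR power2_eq_square)
  show ?thesis
    by (simp only: cost_form_def stage terminal integral_mult_right_zero sum_distrib_left[symmetric]
        distrib_left[symmetric])
qed

lemma integral_quadratic_form_add:
  fixes S :: "real^'n^'n" and X Y :: "'a \<Rightarrow> real^'n"
  assumes S: "transpose S = S" and X: "square_integrable M X" and Y: "square_integrable M Y"
  shows "(\<integral>\<omega>. (X \<omega> + Y \<omega>) \<bullet> (S *v (X \<omega> + Y \<omega>)) \<partial>M)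
    = (\<integral>\<omega>. X \<omega> \<bullet> (S *v X \<omega>) \<partial>M) + 2 * (\<integral>\<omega>. Y \<omega> \<bullet> (S *v X \<omega>) \<partial>M) + (\<integral>\<omega>. Y \<omega> \<bullet> (S *v Y \<omega>) \<partial>M)"
  using integrable_inner_matrix_vector_mult[OF X X, of S] integrable_inner_matrix_vector_mult[OF Y X, of S]
    integrable_inner_matrix_vector_mult[OF Y Y, of S]
  by (simp add: quadratic_form_add[OF S])

lemma integral_quadratic_cost_add:
  fixes S :: "real^'n^'n" and T :: "real^'m^'m"
  assumes S: "transpose S = S" and T: "transpose T = T"
    and X: "square_integrable M X" and Y: "square_integrable M Y"
    and u: "square_integrable M u" and v: "square_integrable M v"
  shows "(\<integral>\<omega>. (X \<omega> + Y \<omega>) \<bullet> (S *v (X \<omega> + Y \<omega>)) + (u \<omega> + v \<omega>) \<bullet> (T *v (u \<omega> + v \<omega>)) \<partial>M)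
    = (\<integral>\<omega>. X \<omega> \<bullet> (S *v X \<omega>) + u \<omega> \<bullet> (T *v u \<omega>) \<partial>M)
      + 2 * (\<integral>\<omega>. Y \<omega> \<bullet> (S *v X \<omega>) + v \<omega> \<bullet> (T *v u \<omega>) \<partial>M)
      + (\<integral>\<omega>. Y \<omega> \<bullet> (S *v Y \<omega>) + v \<omega> \<bullet> (T *v v \<omega>) \<partial>M)"
proof -
  note int = integrable_inner_matrix_vector_mult
  have "(\<integral>\<omega>. (X \<omega> + Y \<omega>) \<bullet> (S *v (X \<omega> + Y \<omega>)) + (u \<omega> + v \<omega>) \<bullet> (T *v (u \<omega> + v \<omega>)) \<partial>M)
      = (\<integral>\<omega>. (X \<omega> + Y \<omega>) \<bullet> (S *v (X \<omega> + Y \<omega>)) \<partial>M) + (\<integral>\<omega>. (u \<omega> + v \<omega>) \<bullet> (T *v (u \<omega> + v \<omega>)) \<partial>M)"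
    by (intro Bochner_Integration.integral_add int square_integrable_add X Y u v)
  also have "\<dots> = ((\<integral>\<omega>. X \<omega> \<bullet> (S *v X \<omega>) \<partial>M) + 2 * (\<integral>\<omega>. Y \<omega> \<bullet> (S *v X \<omega>) \<partial>M)
        + (\<integral>\<omega>. Y \<omega> \<bullet> (S *v Y \<omega>) \<partial>M))
      + ((\<integral>\<omega>. u \<omega> \<bullet> (T *v u \<omega>) \<partial>M) + 2 * (\<integral>\<omega>. v \<omega> \<bullet> (T *v u \<omega>) \<partial>M)
        + (\<integral>\<omega>. v \<omega> \<bullet> (T *v v \<omega>) \<partial>M))"
    by (simp only: integral_quadratic_form_add[OF S X Y] integral_quadratic_form_add[OF T u v])
  also have "\<dots> = (\<integral>\<omega>. X \<omega> \<bullet> (S *v X \<omega>) + u \<omega> \<bullet> (T *v u \<omega>) \<partial>M)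
      + 2 * (\<integral>\<omega>. Y \<omega> \<bullet> (S *v X \<omega>) + v \<omega> \<bullet> (T *v u \<omega>) \<partial>M)
      + (\<integral>\<omega>. Y \<omega> \<bullet> (S *v Y \<omega>) + v \<omega> \<bullet> (T *v v \<omega>) \<partial>M)"
    by (simp only: Bochner_Integration.integral_add[OF int[OF X X] int[OF u u]]
        Bochner_Integration.integral_add[OF int[OF Y X] int[OF v u]]
        Bochner_Integration.integral_add[OF int[OF Y Y] int[OF v v]]) (simp add: algebra_simps)
  finally show ?thesis .
qed

lemma cost_form_add_expand:
  fixes q :: "nat \<Rightarrow> real^'n^'n" and r :: "nat \<Rightarrow> real^'m^'m"
  assumes q: "\<forall>l\<in>{k..<N}. transpose (q l) = q l" and r: "\<forall>l\<in>{k..<N}. transpose (r l) = r l"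
    and g: "transpose g = g" and "k \<le> N"
    and XY: "\<forall>l\<in>{k..N}. square_integrable M (X l) \<and> square_integrable M (Y l)"
    and uv: "\<forall>l\<in>{k..<N}. square_integrable M (u l) \<and> square_integrable M (v l)"
  shows "cost_form M q r g N k (\<lambda>l \<omega>. X l \<omega> + Y l \<omega>) (\<lambda>l \<omega>. u l \<omega> + v l \<omega>)
                               (\<lambda>l \<omega>. X l \<omega> + Y l \<omega>) (\<lambda>l \<omega>. u l \<omega> + v l \<omega>)
    = cost_form M q r g N k X u X u + 2 * cost_form M q r g N k Y v X u + cost_form M q r g N k Y v Y v"
proof -
  have "(\<Sum>l=k..<N. (\<integral>\<omega>. (X l \<omega> + Y l \<omega>) \<bullet> (q l *v (X l \<omega> + Y l \<omega>))
                  + (u l \<omega> + v l \<omega>) \<bullet> (r l *v (u l \<omega> + v l \<omega>)) \<partial>M))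
    = (\<Sum>l=k..<N. (\<integral>\<omega>. X l \<omega> \<bullet> (q l *v X l \<omega>) + u l \<omega> \<bullet> (r l *v u l \<omega>) \<partial>M)
      + 2 * (\<integral>\<omega>. Y l \<omega> \<bullet> (q l *v X l \<omega>) + v l \<omega> \<bullet> (r l *v u l \<omega>) \<partial>M)
      + (\<integral>\<omega>. Y l \<omega> \<bullet> (q l *v Y l \<omega>) + v l \<omega> \<bullet> (r l *v v l \<omega>) \<partial>M))"
    using q r XY uv by (intro sum.cong refl integral_quadratic_cost_add) auto
  moreover have "(\<integral>\<omega>. (X N \<omega> + Y N \<omega>) \<bullet> (g *v (X N \<omega> + Y N \<omega>)) \<partial>M)
    = (\<integral>\<omega>. X N \<omega> \<bullet> (g *v X N \<omega>) \<partial>M) + 2 * (\<integral>\<omega>. Y N \<omega> \<bullet> (g *v X N \<omega>) \<partial>M)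
      + (\<integral>\<omega>. Y N \<omega> \<bullet> (g *v Y N \<omega>) \<partial>M)"
    using XY \<open>k \<le> N\<close> by (intro integral_quadratic_form_add[OF g]) auto
  ultimately show ?thesis
    unfolding cost_form_def
    by (simp only: sum.distrib sum_distrib_left[symmetric]) (simp add: algebra_simps)
qed

section \<open>The noise filtration\<close>

locale unit_variance_noise = prob_space M for M :: "'a measure" +
  fixes x0 :: "'a \<Rightarrow> real^'d" and w :: "nat \<Rightarrow> 'a \<Rightarrow> real"
  assumes borel_measurable_x0: "x0 \<in> borel_measurable M"
    and borel_measurable_w: "\<And>k. w k \<in> borel_measurable M"
    and integrable_w_square: "\<And>k. integrable M (\<lambda>\<omega>. (w k \<omega>)\<^sup>2)"
    and cond_exp_w_square: "\<And>k. AE \<omega> in M. real_cond_exp M (Fprev M x0 w k) (\<lambda>\<omega>. (w k \<omega>)\<^sup>2) \<omega> = 1"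
begin

abbreviation \<F> :: "nat \<Rightarrow> 'a measure" where
  "\<F> j \<equiv> Fprev M x0 w j"

definition generators :: "nat \<Rightarrow> 'a set set" where
  "generators j = (if j = 0 then {} else
     {x0 -` A \<inter> space M | A. A \<in> sets borel} \<union>
     {w l -` B \<inter> space M | l B. l \<le> j - 1 \<and> B \<in> sets borel})"

lemma generators_subset_sets: "generators j \<subseteq> sets M"
  unfolding generators_def using borel_measurable_x0 borel_measurable_w
  by (auto intro!: measurable_sets)

lemma generators_mono:
  assumes "i \<le> j"
  shows "generators i \<subseteq> generators j"
proof (cases "i = 0")
  case False
  then have i: "i \<noteq> 0" and j: "j \<noteq> 0" and le: "\<And>l. l \<le> i - 1 \<Longrightarrow> l \<le> j - 1"
    using assms by auto
  show ?thesis
    unfolding generators_def by (simp only: i j if_False) (blast intro: le)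
qed (simp add: generators_def)

lemma Fprev_eq_sigma: "\<F> j = sigma (space M) (generators j)"
  unfolding Fprev_def generators_def by simp

lemma sets_Fprev: "sets (\<F> j) = sigma_sets (space M) (generators j)"
  using generators_subset_sets[of j] sets.sets_into_space
  by (subst Fprev_eq_sigma, intro sets_measure_of) blast

lemma space_Fprev [simp]: "space (\<F> j) = space M"
  using generators_subset_sets[of j] sets.sets_into_space
  by (subst Fprev_eq_sigma, intro space_measure_of) blast

lemma subalgebra_Fprev: "subalgebra M (\<F> j)"
  unfolding subalgebra_def sets_Fprev
  using sets.sigma_sets_subset[OF generators_subset_sets] by simp

lemma finite_measure_subalgebra_Fprev: "finite_measure_subalgebra M (\<F> j)"
  by (simp add: finite_measure_subalgebra_def finite_measure_subalgebra_axioms_def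
      subalgebra_Fprev)

lemma borel_measurable_Fprev_imp_M: "f \<in> borel_measurable (\<F> j) \<Longrightarrow> f \<in> borel_measurable M"
  using measurable_from_subalg[OF subalgebra_Fprev] by blast

lemma borel_measurable_Fprev_mono:
  "i \<le> j \<Longrightarrow> f \<in> borel_measurable (\<F> i) \<Longrightarrow> f \<in> borel_measurable (\<F> j)"
  using measurable_from_subalg[of "\<F> j" "\<F> i"] sigma_sets_mono'[OF generators_mono]
  by (auto simp: subalgebra_def sets_Fprev)

lemma borel_measurable_w_Fprev: "w l \<in> borel_measurable (\<F> (Suc l))"
proof (rule measurableI)
  fix B :: "real set" assume "B \<in> sets borel"
  then have "w l -` B \<inter> space M \<in> generators (Suc l)" unfolding generators_def by auto
  then show "w l -` B \<inter> space (\<F> (Suc l)) \<in> sets (\<F> (Suc l))"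
    unfolding sets_Fprev by auto
qed simp

lemma L2k_iff: "\<xi> \<in> L2k M x0 w k \<longleftrightarrow> \<xi> \<in> borel_measurable (\<F> k) \<and> square_integrable M \<xi>"
  unfolding L2k_def square_integrable_def using borel_measurable_Fprev_imp_M by blast

lemma L2k_zero: "(\<lambda>\<omega>. 0) \<in> L2k M x0 w k"
  by (simp add: L2k_iff square_integrable_zero)

lemma L2k_add:
  "\<xi> \<in> L2k M x0 w k \<Longrightarrow> \<eta> \<in> L2k M x0 w k \<Longrightarrow> (\<lambda>\<omega>. \<xi> \<omega> + \<eta> \<omega>) \<in> L2k M x0 w k"
  by (simp add: L2k_iff square_integrable_add borel_measurable_add)

lemma L2k_scaleR: "\<xi> \<in> L2k M x0 w k \<Longrightarrow> (\<lambda>\<omega>. r *\<^sub>R \<xi> \<omega>) \<in> L2k M x0 w k"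
  by (simp add: L2k_iff square_integrable_scaleR
      borel_measurable_bounded_linear[OF bounded_linear_scaleR_right])

lemma L2k_diff:
  "\<xi> \<in> L2k M x0 w k \<Longrightarrow> \<eta> \<in> L2k M x0 w k \<Longrightarrow> (\<lambda>\<omega>. \<xi> \<omega> - \<eta> \<omega>) \<in> L2k M x0 w k"
  by (simp add: L2k_iff square_integrable_diff borel_measurable_diff)

lemma L2k_matrix_vector_mult:
  "\<xi> \<in> L2k M x0 w k \<Longrightarrow> (\<lambda>\<omega>. (S::real^'n^'m) *v \<xi> \<omega>) \<in> L2k M x0 w k"
  by (simp add: L2k_iff square_integrable_matrix_vector_mult borel_measurable_matrix_vector_mult)

lemma cexp_in_L2k: "square_integrable M Z \<Longrightarrow> cexp M (\<F> k) Z \<in> L2k M x0 w k"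
  by (simp add: L2k_iff borel_measurable_cexp
      finite_measure_subalgebra.square_integrable_cexp[OF finite_measure_subalgebra_Fprev])

lemma square_integrable_w_scaleR:
  "f \<in> L2k M x0 w l \<Longrightarrow> square_integrable M (\<lambda>\<omega>. w l \<omega> *\<^sub>R f \<omega>)"
  by (simp add: L2k_iff finite_measure_subalgebra.square_integrable_scaleR_unit_cond_variance[OF
        finite_measure_subalgebra_Fprev _ _ borel_measurable_w cond_exp_w_square])

lemma cexp_w_scaleR_in_L2k:
  "square_integrable M Z \<Longrightarrow> cexp M (\<F> l) (\<lambda>\<eta>. w l \<eta> *\<^sub>R Z \<eta>) \<in> L2k M x0 w l"
  by (simp add: L2k_iff borel_measurable_cexp square_integrable_real_iff borel_measurable_w
      integrable_w_square cond_exp_w_square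
      finite_measure_subalgebra.square_integrable_cexp_scaleR[OF finite_measure_subalgebra_Fprev])

lemma traj_L2k:
  assumes y: "y \<in> L2k M x0 w s" and u: "\<forall>l\<in>{s..<N}. u l \<in> L2k M x0 w l"
  shows "s \<le> l \<Longrightarrow> l \<le> N \<Longrightarrow> traj a b c d w s y u l \<in> L2k M x0 w l"
proof (induction l rule: dec_induct)
  case base
  then show ?case using y by simp
next
  case (step l)
  let ?X = "traj a b c d w s y u l"
  have X: "?X \<in> L2k M x0 w l" and ul: "u l \<in> L2k M x0 w l" using step u by auto
  then have cXdu: "(\<lambda>\<omega>. c l *v ?X \<omega> + d l *v u l \<omega>) \<in> L2k M x0 w l"
    by (intro L2k_add L2k_matrix_vector_mult)
  have [measurable]: "?X \<in> borel_measurable (\<F> (Suc l))" "u l \<in> borel_measurable (\<F> (Suc l))"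
    "w l \<in> borel_measurable (\<F> (Suc l))"
    using X ul borel_measurable_Fprev_mono[of l "Suc l"] borel_measurable_w_Fprev
    by (auto simp: L2k_iff)
  have "square_integrable M (\<lambda>\<omega>. a l *v ?X \<omega> + b l *v u l \<omega> + w l \<omega> *\<^sub>R (c l *v ?X \<omega> + d l *v u l \<omega>))"
    using X ul square_integrable_w_scaleR[OF cXdu]
    by (intro square_integrable_add square_integrable_matrix_vector_mult) (auto simp: L2k_iff)
  then show ?case
    unfolding traj_Suc[OF step(1)] L2k_iff by simp
qed

text \<open>Duality for one step of the state equation: this is where the conditional expectations
  in the adjoint equation come from.\<close>
lemma integral_inner_transition_adjoint:
  fixes V :: "'a \<Rightarrow> real^'m" and Z :: "'a \<Rightarrow> real^'n" and b d :: "real^'m^'n"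
  assumes V: "V \<in> L2k M x0 w l" and Z: "square_integrable M Z"
  shows "(\<integral>\<omega>. (b *v V \<omega> + w l \<omega> *\<^sub>R (d *v V \<omega>)) \<bullet> Z \<omega> \<partial>M)
    = (\<integral>\<omega>. V \<omega> \<bullet> (transpose b *v cexp M (\<F> l) Z \<omega>
                  + transpose d *v cexp M (\<F> l) (\<lambda>\<eta>. w l \<eta> *\<^sub>R Z \<eta>) \<omega>) \<partial>M)"
proof -
  interpret finite_measure_subalgebra M "\<F> l" by (rule finite_measure_subalgebra_Fprev)
  have bV: "(\<lambda>\<omega>. b *v V \<omega>) \<in> L2k M x0 w l" and dV: "(\<lambda>\<omega>. d *v V \<omega>) \<in> L2k M x0 w l"
    using V by (auto intro: L2k_matrix_vector_mult)
  have wdV: "square_integrable M (\<lambda>\<omega>. w l \<omega> *\<^sub>R (d *v V \<omega>))"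
    by (rule square_integrable_w_scaleR[OF dV])
  have ZM: "Z \<in> borel_measurable M" and wZM: "(\<lambda>\<eta>. w l \<eta> *\<^sub>R Z \<eta>) \<in> borel_measurable M"
    using Z borel_measurable_w[of l] by (auto simp: square_integrable_def)
  have cZ: "square_integrable M (cexp M (\<F> l) Z)"
    and cwZ: "square_integrable M (cexp M (\<F> l) (\<lambda>\<eta>. w l \<eta> *\<^sub>R Z \<eta>))"
    using cexp_in_L2k[OF Z] cexp_w_scaleR_in_L2k[OF Z] by (auto simp: L2k_iff)
  note int = integrable_inner_square_integrable integrable_inner_matrix_vector_mult
  have "(\<integral>\<omega>. (b *v V \<omega> + w l \<omega> *\<^sub>R (d *v V \<omega>)) \<bullet> Z \<omega> \<partial>M)
      = (\<integral>\<omega>. (b *v V \<omega>) \<bullet> Z \<omega> + (w l \<omega> *\<^sub>R (d *v V \<omega>)) \<bullet> Z \<omega> \<partial>M)"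
    by (simp only: inner_add_left)
  also have "\<dots> = (\<integral>\<omega>. (b *v V \<omega>) \<bullet> Z \<omega> \<partial>M) + (\<integral>\<omega>. (w l \<omega> *\<^sub>R (d *v V \<omega>)) \<bullet> Z \<omega> \<partial>M)"
    using bV wdV Z by (intro Bochner_Integration.integral_add int) (simp_all add: L2k_iff)
  also have "(\<integral>\<omega>. (b *v V \<omega>) \<bullet> Z \<omega> \<partial>M) = (\<integral>\<omega>. V \<omega> \<bullet> (transpose b *v cexp M (\<F> l) Z \<omega>) \<partial>M)"
    unfolding inner_transpose_mult
    using bV integrable_vec_nth_mult[of M "\<lambda>\<omega>. b *v V \<omega>" Z] Z
    by (intro integral_inner_cexp[symmetric, OF _ ZM]) (auto simp: L2k_iff)
  also have "(\<integral>\<omega>. (w l \<omega> *\<^sub>R (d *v V \<omega>)) \<bullet> Z \<omega> \<partial>M) = (\<integral>\<omega>. (d *v V \<omega>) \<bullet> (w l \<omega> *\<^sub>R Z \<omega>) \<partial>M)"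
    by simp
  also have "\<dots> = (\<integral>\<omega>. V \<omega> \<bullet> (transpose d *v cexp M (\<F> l) (\<lambda>\<eta>. w l \<eta> *\<^sub>R Z \<eta>) \<omega>) \<partial>M)"
    unfolding inner_transpose_mult
  proof (rule integral_inner_cexp[symmetric, OF _ wZM])
    show "(\<lambda>\<omega>. d *v V \<omega>) \<in> borel_measurable (\<F> l)" using dV by (simp add: L2k_iff)
    show "integrable M (\<lambda>\<omega>. (d *v V \<omega>) $ i * (w l \<omega> *\<^sub>R Z \<omega>) $ i)" for i
      using integrable_vec_nth_mult[OF wdV Z, of i] by (simp add: mult_ac)
  qed
  also have "(\<integral>\<omega>. V \<omega> \<bullet> (transpose b *v cexp M (\<F> l) Z \<omega>) \<partial>M)
      + (\<integral>\<omega>. V \<omega> \<bullet> (transpose d *v cexp M (\<F> l) (\<lambda>\<eta>. w l \<eta> *\<^sub>R Z \<eta>) \<omega>) \<partial>M)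
    = (\<integral>\<omega>. V \<omega> \<bullet> (transpose b *v cexp M (\<F> l) Z \<omega>
                  + transpose d *v cexp M (\<F> l) (\<lambda>\<eta>. w l \<eta> *\<^sub>R Z \<eta>) \<omega>) \<partial>M)"
    unfolding inner_add_right
    using V cZ cwZ by (intro Bochner_Integration.integral_add[symmetric] int) (simp_all add: L2k_iff)
  finally show ?thesis .
qed

section \<open>The adjoint equation\<close>

definition adjoint_solution :: "(nat \<Rightarrow> real^'n^'n) \<Rightarrow> (nat \<Rightarrow> real^'n^'n) \<Rightarrow> (nat \<Rightarrow> real^'n^'n)
    \<Rightarrow> real^'n^'n \<Rightarrow> nat \<Rightarrow> nat \<Rightarrow> (nat \<Rightarrow> 'a \<Rightarrow> real^'n) \<Rightarrow> (nat \<Rightarrow> 'a \<Rightarrow> real^'n) \<Rightarrow> bool" where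
  "adjoint_solution a c q g N k X Z \<longleftrightarrow>
     (\<forall>l\<in>{k..N}. square_integrable M (Z l)) \<and>
     (\<forall>l\<in>{k..<N}. AE \<omega> in M. Z l \<omega> =
          transpose (a l) *v cexp M (\<F> l) (Z (Suc l)) \<omega>
        + transpose (c l) *v cexp M (\<F> l) (\<lambda>\<eta>. w l \<eta> *\<^sub>R Z (Suc l) \<eta>) \<omega>
        + q l *v X l \<omega>) \<and>
     (AE \<omega> in M. Z N \<omega> = g *v X N \<omega>)"

text \<open>Indexed by the number \<open>i = N - l\<close> of steps before the horizon, so that the backward
  recursion is a primitive recursion.\<close>
primrec adjoint_from_end :: "(nat \<Rightarrow> real^'n^'n) \<Rightarrow> (nat \<Rightarrow> real^'n^'n) \<Rightarrow> (nat \<Rightarrow> real^'n^'n)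
    \<Rightarrow> real^'n^'n \<Rightarrow> nat \<Rightarrow> (nat \<Rightarrow> 'a \<Rightarrow> real^'n) \<Rightarrow> nat \<Rightarrow> 'a \<Rightarrow> real^'n" where
  "adjoint_from_end a c q g N X 0 = (\<lambda>\<omega>. g *v X N \<omega>)"
| "adjoint_from_end a c q g N X (Suc i) = (\<lambda>\<omega>.
      transpose (a (N - Suc i)) *v cexp M (\<F> (N - Suc i)) (adjoint_from_end a c q g N X i) \<omega>
    + transpose (c (N - Suc i)) *v cexp M (\<F> (N - Suc i))
         (\<lambda>\<eta>. w (N - Suc i) \<eta> *\<^sub>R adjoint_from_end a c q g N X i \<eta>) \<omega>
    + q (N - Suc i) *v X (N - Suc i) \<omega>)"

lemma adjoint_solution_adjoint_from_end:
  assumes "k \<le> N" and X: "\<forall>l\<in>{k..N}. square_integrable M (X l)"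
  shows "adjoint_solution a c q g N k X (\<lambda>l. adjoint_from_end a c q g N X (N - l))"
proof -
  have "square_integrable M (adjoint_from_end a c q g N X i)" if "i \<le> N - k" for i
    using that
  proof (induction i)
    case 0
    then show ?case using X \<open>k \<le> N\<close> by (simp add: square_integrable_matrix_vector_mult)
  next
    case (Suc i)
    then have "square_integrable M (adjoint_from_end a c q g N X i)" "square_integrable M (X (N - Suc i))"
      using X by auto
    then show ?case
      unfolding adjoint_from_end.simps
      using cexp_in_L2k cexp_w_scaleR_in_L2k
      by (intro square_integrable_add square_integrable_matrix_vector_mult) (auto simp: L2k_iff)
  qed
  moreover have "N - l = Suc (N - Suc l)" "N - Suc (N - Suc l) = l" if "l < N" for l
    using that by auto
  ultimately show ?thesis
    unfolding adjoint_solution_def by auto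
qed

lemma integral_inner_adjoint_step:
  assumes Z: "adjoint_solution a c q g N k X Z" and X: "\<forall>l\<in>{k..N}. square_integrable M (X l)"
    and "k \<le> i" "i < N" and V: "V \<in> L2k M x0 w i"
  shows "(\<integral>\<omega>. V \<omega> \<bullet> Z i \<omega> \<partial>M)
    = (\<integral>\<omega>. (a i *v V \<omega> + w i \<omega> *\<^sub>R (c i *v V \<omega>)) \<bullet> Z (Suc i) \<omega> \<partial>M)
      + (\<integral>\<omega>. V \<omega> \<bullet> (q i *v X i \<omega>) \<partial>M)"
proof -
  have ZS: "square_integrable M (Z (Suc i))" and Zi: "square_integrable M (Z i)"
    and Xi: "square_integrable M (X i)"
    using Z X \<open>k \<le> i\<close> \<open>i < N\<close> by (auto simp: adjoint_solution_def)
  have ZE: "AE \<omega> in M. Z i \<omega> = transpose (a i) *v cexp M (\<F> i) (Z (Suc i)) \<omega>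
        + transpose (c i) *v cexp M (\<F> i) (\<lambda>\<eta>. w i \<eta> *\<^sub>R Z (Suc i) \<eta>) \<omega> + q i *v X i \<omega>"
    using Z \<open>k \<le> i\<close> \<open>i < N\<close> by (simp add: adjoint_solution_def)
  let ?P = "\<lambda>\<omega>. transpose (a i) *v cexp M (\<F> i) (Z (Suc i)) \<omega>
        + transpose (c i) *v cexp M (\<F> i) (\<lambda>\<eta>. w i \<eta> *\<^sub>R Z (Suc i) \<eta>) \<omega>"
  have sqP: "square_integrable M ?P"
    using cexp_in_L2k[OF ZS] cexp_w_scaleR_in_L2k[OF ZS]
    by (intro square_integrable_add square_integrable_matrix_vector_mult) (auto simp: L2k_iff)
  have "(\<integral>\<omega>. V \<omega> \<bullet> Z i \<omega> \<partial>M) = (\<integral>\<omega>. V \<omega> \<bullet> ?P \<omega> + V \<omega> \<bullet> (q i *v X i \<omega>) \<partial>M)"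
  proof (rule integral_cong_AE)
    show "AE \<omega> in M. V \<omega> \<bullet> Z i \<omega> = V \<omega> \<bullet> ?P \<omega> + V \<omega> \<bullet> (q i *v X i \<omega>)"
      using ZE by eventually_elim (simp add: inner_add_right)
  qed (use V Zi Xi sqP in \<open>auto simp: L2k_iff square_integrable_def
        intro: borel_measurable_inner borel_measurable_matrix_vector_mult\<close>)
  also have "\<dots> = (\<integral>\<omega>. V \<omega> \<bullet> ?P \<omega> \<partial>M) + (\<integral>\<omega>. V \<omega> \<bullet> (q i *v X i \<omega>) \<partial>M)"
    using V Xi sqP
    by (intro Bochner_Integration.integral_add integrable_inner_square_integrable
        integrable_inner_matrix_vector_mult) (auto simp: L2k_iff)
  also have "(\<integral>\<omega>. V \<omega> \<bullet> ?P \<omega> \<partial>M)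
      = (\<integral>\<omega>. (a i *v V \<omega> + w i \<omega> *\<^sub>R (c i *v V \<omega>)) \<bullet> Z (Suc i) \<omega> \<partial>M)"
    by (rule integral_inner_transition_adjoint[OF V ZS, symmetric])
  finally show ?thesis .
qed

lemma adjoint_telescope:
  assumes Z: "adjoint_solution a c q g N k X Z" and X: "\<forall>l\<in>{k..N}. square_integrable M (X l)"
    and "k \<le> i" "i \<le> N"
    and Y: "\<forall>l\<in>{i..N}. Y l \<in> L2k M x0 w l"
    and Y_Suc: "\<forall>l\<in>{i..<N}. Y (Suc l) = (\<lambda>\<omega>. a l *v Y l \<omega> + w l \<omega> *\<^sub>R (c l *v Y l \<omega>))"
  shows "(\<integral>\<omega>. Y i \<omega> \<bullet> Z i \<omega> \<partial>M)
    = (\<Sum>l=i..<N. (\<integral>\<omega>. Y l \<omega> \<bullet> (q l *v X l \<omega>) \<partial>M)) + (\<integral>\<omega>. Y N \<omega> \<bullet> (g *v X N \<omega>) \<partial>M)"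
  using \<open>i \<le> N\<close> \<open>k \<le> i\<close> Y Y_Suc
proof (induction i rule: inc_induct)
  case base
  have "square_integrable M (Y N)" "square_integrable M (Z N)" "square_integrable M (X N)"
    using base Z X by (auto simp: adjoint_solution_def L2k_iff)
  moreover have "AE \<omega> in M. Z N \<omega> = g *v X N \<omega>" using Z by (simp add: adjoint_solution_def)
  ultimately have "(\<integral>\<omega>. Y N \<omega> \<bullet> Z N \<omega> \<partial>M) = (\<integral>\<omega>. Y N \<omega> \<bullet> (g *v X N \<omega>) \<partial>M)"
    by (intro integral_cong_AE)
      (auto simp: square_integrable_def intro: borel_measurable_inner borel_measurable_matrix_vector_mult
        elim!: eventually_mono)
  then show ?case by simp
next
  case (step i)
  have "(\<integral>\<omega>. Y i \<omega> \<bullet> Z i \<omega> \<partial>M)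
      = (\<integral>\<omega>. Y (Suc i) \<omega> \<bullet> Z (Suc i) \<omega> \<partial>M) + (\<integral>\<omega>. Y i \<omega> \<bullet> (q i *v X i \<omega>) \<partial>M)"
    using integral_inner_adjoint_step[OF Z X, of i "Y i"] step by simp
  also have "(\<integral>\<omega>. Y (Suc i) \<omega> \<bullet> Z (Suc i) \<omega> \<partial>M)
    = (\<Sum>l=Suc i..<N. (\<integral>\<omega>. Y l \<omega> \<bullet> (q l *v X l \<omega>) \<partial>M)) + (\<integral>\<omega>. Y N \<omega> \<bullet> (g *v X N \<omega>) \<partial>M)"
    using step by (intro step.IH) auto
  finally show ?case
    using step by (simp add: sum.atLeast_Suc_lessThan)
qed

definition stationarity_residual :: "real^'m^'n \<Rightarrow> real^'m^'n \<Rightarrow> real^'m^'m \<Rightarrow> nat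
    \<Rightarrow> ('a \<Rightarrow> real^'m) \<Rightarrow> (nat \<Rightarrow> 'a \<Rightarrow> real^'n) \<Rightarrow> 'a \<Rightarrow> real^'m" where
  "stationarity_residual b d r k v Z = (\<lambda>\<omega>. r *v v \<omega>
     + transpose b *v cexp M (\<F> k) (Z (Suc k)) \<omega>
     + transpose d *v cexp M (\<F> k) (\<lambda>\<eta>. w k \<eta> *\<^sub>R Z (Suc k) \<eta>) \<omega>)"

lemma stationarity_residual_L2k:
  "v \<in> L2k M x0 w k \<Longrightarrow> square_integrable M (Z (Suc k)) \<Longrightarrow>
    stationarity_residual b d r k v Z \<in> L2k M x0 w k"
  unfolding stationarity_residual_def
  by (intro L2k_add L2k_matrix_vector_mult cexp_in_L2k cexp_w_scaleR_in_L2k)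

definition convexity_functional :: "(nat \<Rightarrow> real^'n^'n) \<Rightarrow> (nat \<Rightarrow> real^'m^'n) \<Rightarrow> (nat \<Rightarrow> real^'n^'n)
    \<Rightarrow> (nat \<Rightarrow> real^'m^'n) \<Rightarrow> (nat \<Rightarrow> real^'n^'n) \<Rightarrow> (nat \<Rightarrow> real^'m^'m) \<Rightarrow> real^'n^'n
    \<Rightarrow> nat \<Rightarrow> nat \<Rightarrow> ('a \<Rightarrow> real^'m) \<Rightarrow> real" where
  "convexity_functional a b c d q r g N k v =
     (let Y = traj a b c d w k (\<lambda>\<omega>. 0) (pulse k v) in cost_form M q r g N k Y (pulse k v) Y (pulse k v))"

lemma convexity_functional_scaleR:
  "convexity_functional a b c d q r g N k (\<lambda>\<omega>. s *\<^sub>R v \<omega>) = s\<^sup>2 * convexity_functional a b c d q r g N k v"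
proof -
  have "traj a b c d w k (\<lambda>\<omega>. 0) (pulse k (\<lambda>\<omega>. s *\<^sub>R v \<omega>))
      = (\<lambda>l \<omega>. s *\<^sub>R traj a b c d w k (\<lambda>\<omega>. 0) (pulse k v) l \<omega>)"
    using traj_scaleR[of a b c d w k s "\<lambda>\<omega>. 0" "pulse k v"] by (simp add: pulse_scaleR fun_eq_iff)
  then show ?thesis
    unfolding convexity_functional_def Let_def pulse_scaleR by (simp only: cost_form_scaleR)
qed

lemma pulse_L2k: "v \<in> L2k M x0 w k \<Longrightarrow> \<forall>l\<in>{k..<N}. pulse k v l \<in> L2k M x0 w l"
  by (simp add: pulse_def L2k_zero)

lemma convexity_functional_eq:
  assumes "k < N" and v: "v \<in> L2k M x0 w k"
  shows "convexity_functional a b c d q r g N k v =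
    (let Y = traj a b c d w k (\<lambda>\<omega>. 0) (\<lambda>l. if l = k then v else (\<lambda>\<omega>. 0)) in
       (\<Sum>l=k..<N. (\<integral>\<omega>. Y l \<omega> \<bullet> (q l *v Y l \<omega>) \<partial>M)) + (\<integral>\<omega>. v \<omega> \<bullet> (r k *v v \<omega>) \<partial>M)
       + (\<integral>\<omega>. Y N \<omega> \<bullet> (g *v Y N \<omega>) \<partial>M))"
proof -
  let ?Y = "traj a b c d w k (\<lambda>\<omega>. 0) (pulse k v)"
  have Y: "square_integrable M (?Y l)" if "k \<le> l" "l \<le> N" for l
    using traj_L2k[OF L2k_zero pulse_L2k[OF v], where N=N and l=l and a=a and b=b and c=c and d=d] that
    by (simp add: L2k_iff)
  have sv: "square_integrable M v" using v by (simp add: L2k_iff)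
  have "(\<integral>\<omega>. ?Y l \<omega> \<bullet> (q l *v ?Y l \<omega>) + pulse k v l \<omega> \<bullet> (r l *v pulse k v l \<omega>) \<partial>M)
      = (\<integral>\<omega>. ?Y l \<omega> \<bullet> (q l *v ?Y l \<omega>) \<partial>M) + (if l = k then \<integral>\<omega>. v \<omega> \<bullet> (r k *v v \<omega>) \<partial>M else 0)"
    if "l \<in> {k..<N}" for l
    using that Y[of l] integrable_inner_matrix_vector_mult[OF sv sv, of "r k"]
      integrable_inner_matrix_vector_mult[of M "?Y l" "?Y l" "q l"]
    by (auto simp: pulse_def)
  then show ?thesis
    using \<open>k < N\<close> by (simp add: convexity_functional_def cost_form_def sum.distrib pulse_def[symmetric])
qed

lemma cost_form_pulse_cross:
  assumes "k < N" and y: "y \<in> L2k M x0 w k" and u: "\<forall>l\<in>{k..<N}. u l \<in> L2k M x0 w l"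
    and v: "v \<in> L2k M x0 w k"
    and Z: "adjoint_solution a c q g N k (traj a b c d w k y u) Z"
  shows "cost_form M q r g N k (traj a b c d w k (\<lambda>\<omega>. 0) (pulse k v)) (pulse k v) (traj a b c d w k y u) u
    = (\<integral>\<omega>. v \<omega> \<bullet> stationarity_residual (b k) (d k) (r k) k (u k) Z \<omega> \<partial>M)"
proof -
  let ?X = "traj a b c d w k y u" and ?Y = "traj a b c d w k (\<lambda>\<omega>. 0) (pulse k v)"
  have X: "\<forall>l\<in>{k..N}. square_integrable M (?X l)"
    using traj_L2k[OF y u] by (simp add: L2k_iff)
  have Y: "\<forall>l\<in>{Suc k..N}. ?Y l \<in> L2k M x0 w l"
    using traj_L2k[OF L2k_zero pulse_L2k[OF v], where N=N and a=a and b=b and c=c and d=d] by simp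
  have Y_Suc_k: "?Y (Suc k) = (\<lambda>\<omega>. b k *v v \<omega> + w k \<omega> *\<^sub>R (d k *v v \<omega>))"
    by (simp add: traj_Suc pulse_def)
  have Y_Suc: "\<forall>l\<in>{Suc k..<N}. ?Y (Suc l) = (\<lambda>\<omega>. a l *v ?Y l \<omega> + w l \<omega> *\<^sub>R (c l *v ?Y l \<omega>))"
    by (simp add: traj_Suc pulse_def)
  have ZS: "square_integrable M (Z (Suc k))" using Z \<open>k < N\<close> by (simp add: adjoint_solution_def)
  have su: "square_integrable M (u k)" using u \<open>k < N\<close> by (simp add: L2k_iff)
  have sv: "square_integrable M v" using v by (simp add: L2k_iff)
  let ?P = "\<lambda>\<omega>. transpose (b k) *v cexp M (\<F> k) (Z (Suc k)) \<omega>
              + transpose (d k) *v cexp M (\<F> k) (\<lambda>\<eta>. w k \<eta> *\<^sub>R Z (Suc k) \<eta>) \<omega>"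
  have "cost_form M q r g N k ?Y (pulse k v) ?X u
      = (\<integral>\<omega>. v \<omega> \<bullet> (r k *v u k \<omega>) \<partial>M) + (\<integral>\<omega>. ?Y (Suc k) \<omega> \<bullet> Z (Suc k) \<omega> \<partial>M)"
    using \<open>k < N\<close> adjoint_telescope[OF Z X _ _ Y Y_Suc]
    by (simp add: cost_form_def sum.atLeast_Suc_lessThan pulse_def)
  also have "(\<integral>\<omega>. ?Y (Suc k) \<omega> \<bullet> Z (Suc k) \<omega> \<partial>M) = (\<integral>\<omega>. v \<omega> \<bullet> ?P \<omega> \<partial>M)"
    unfolding Y_Suc_k by (rule integral_inner_transition_adjoint[OF v ZS])
  also have "(\<integral>\<omega>. v \<omega> \<bullet> (r k *v u k \<omega>) \<partial>M) + (\<integral>\<omega>. v \<omega> \<bullet> ?P \<omega> \<partial>M)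
      = (\<integral>\<omega>. v \<omega> \<bullet> (r k *v u k \<omega>) + v \<omega> \<bullet> ?P \<omega> \<partial>M)"
  proof (rule Bochner_Integration.integral_add[symmetric])
    show "integrable M (\<lambda>\<omega>. v \<omega> \<bullet> (r k *v u k \<omega>))"
      by (rule integrable_inner_matrix_vector_mult[OF sv su])
    show "integrable M (\<lambda>\<omega>. v \<omega> \<bullet> ?P \<omega>)"
      using cexp_in_L2k[OF ZS, of k] cexp_w_scaleR_in_L2k[OF ZS, of k]
      by (intro integrable_inner_square_integrable[OF sv] square_integrable_add
          square_integrable_matrix_vector_mult) (simp_all add: L2k_iff)
  qed
  finally show ?thesis
    unfolding stationarity_residual_def by (simp only: inner_add_right add.assoc)
qed

section \<open>Characterisation of equilibrium controls\<close>

lemma Jcost_pulse_update: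
  fixes A C Q :: "nat \<Rightarrow> nat \<Rightarrow> real^'n^'n" and B D :: "nat \<Rightarrow> nat \<Rightarrow> real^'m^'n"
    and R :: "nat \<Rightarrow> nat \<Rightarrow> real^'m^'m" and u :: "nat \<Rightarrow> 'a \<Rightarrow> real^'m"
  assumes "k < N"
    and Q: "\<forall>l\<in>{k..<N}. transpose (Q k l) = Q k l" and R: "\<forall>l\<in>{k..<N}. transpose (R k l) = R k l"
    and G: "transpose (G k) = G k"
    and y: "y \<in> L2k M x0 w k" and u: "\<forall>l\<in>{k..<N}. u l \<in> L2k M x0 w l" and v: "v \<in> L2k M x0 w k"
    and Z: "adjoint_solution (A k) (C k) (Q k) (G k) N k (traj (A k) (B k) (C k) (D k) w k y u) Z"
  shows "Jcost M A B C D Q R G w N k y (u(k := (\<lambda>\<omega>. u k \<omega> + v \<omega>)))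
    = Jcost M A B C D Q R G w N k y u
      + 2 * (\<integral>\<omega>. v \<omega> \<bullet> stationarity_residual (B k k) (D k k) (R k k) k (u k) Z \<omega> \<partial>M)
      + convexity_functional (A k) (B k) (C k) (D k) (Q k) (R k) (G k) N k v"
proof -
  let ?X = "traj (A k) (B k) (C k) (D k) w k y u"
  let ?Y = "traj (A k) (B k) (C k) (D k) w k (\<lambda>\<omega>. 0) (pulse k v)"
  let ?u = "\<lambda>l \<omega>. u l \<omega> + pulse k v l \<omega>"
  have XY: "traj (A k) (B k) (C k) (D k) w k y ?u = (\<lambda>l \<omega>. ?X l \<omega> + ?Y l \<omega>)"
    using traj_add[of "A k" "B k" "C k" "D k" w k y "\<lambda>\<omega>. 0" u "pulse k v"] by (simp add: fun_eq_iff)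
  have sqXY: "\<forall>l\<in>{k..N}. square_integrable M (?X l) \<and> square_integrable M (?Y l)"
    using traj_L2k[OF y u, where a="A k" and b="B k" and c="C k" and d="D k"]
      traj_L2k[OF L2k_zero pulse_L2k[OF v], where N=N and a="A k" and b="B k" and c="C k" and d="D k"]
    by (auto simp: L2k_iff)
  have squv: "\<forall>l\<in>{k..<N}. square_integrable M (u l) \<and> square_integrable M (pulse k v l)"
    using u v by (auto simp: pulse_def L2k_iff square_integrable_zero)
  have "Jcost M A B C D Q R G w N k y (u(k := (\<lambda>\<omega>. u k \<omega> + v \<omega>)))
      = cost_form M (Q k) (R k) (G k) N k (\<lambda>l \<omega>. ?X l \<omega> + ?Y l \<omega>) ?u (\<lambda>l \<omega>. ?X l \<omega> + ?Y l \<omega>) ?u"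
    unfolding fun_upd_eq_add_pulse by (rule Jcost_eq_cost_form) (simp add: XY)
  also have "\<dots> = cost_form M (Q k) (R k) (G k) N k ?X u ?X u
      + 2 * cost_form M (Q k) (R k) (G k) N k ?Y (pulse k v) ?X u
      + cost_form M (Q k) (R k) (G k) N k ?Y (pulse k v) ?Y (pulse k v)"
    using \<open>k < N\<close> by (intro cost_form_add_expand[OF Q R G _ sqXY squv]) simp
  also have "cost_form M (Q k) (R k) (G k) N k ?X u ?X u = Jcost M A B C D Q R G w N k y u"
    by (rule Jcost_eq_cost_form[symmetric]) simp
  also have "cost_form M (Q k) (R k) (G k) N k ?Y (pulse k v) ?X u
      = (\<integral>\<omega>. v \<omega> \<bullet> stationarity_residual (B k k) (D k k) (R k k) k (u k) Z \<omega> \<partial>M)"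
    by (rule cost_form_pulse_cross[OF \<open>k < N\<close> y u v Z])
  finally show ?thesis
    unfolding convexity_functional_def Let_def .
qed

lemma AE_eq_0_iff_orthogonal_L2k:
  assumes \<Lambda>: "\<Lambda> \<in> L2k M x0 w k"
  shows "(AE \<omega> in M. \<Lambda> \<omega> = 0) \<longleftrightarrow> (\<forall>v\<in>L2k M x0 w k. (\<integral>\<omega>. v \<omega> \<bullet> \<Lambda> \<omega> \<partial>M) = 0)"
proof
  assume "AE \<omega> in M. \<Lambda> \<omega> = 0"
  then show "\<forall>v\<in>L2k M x0 w k. (\<integral>\<omega>. v \<omega> \<bullet> \<Lambda> \<omega> \<partial>M) = 0"
    by (auto intro!: integral_eq_zero_AE elim: eventually_mono)
next
  assume "\<forall>v\<in>L2k M x0 w k. (\<integral>\<omega>. v \<omega> \<bullet> \<Lambda> \<omega> \<partial>M) = 0"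
  then have "(\<integral>\<omega>. \<Lambda> \<omega> \<bullet> \<Lambda> \<omega> \<partial>M) = 0" using \<Lambda> by blast
  moreover have "integrable M (\<lambda>\<omega>. \<Lambda> \<omega> \<bullet> \<Lambda> \<omega>)"
    using \<Lambda> by (intro integrable_inner_square_integrable) (simp_all add: L2k_iff)
  ultimately have "AE \<omega> in M. \<Lambda> \<omega> \<bullet> \<Lambda> \<omega> = 0"
    using integral_nonneg_eq_0_iff_AE[of M "\<lambda>\<omega>. \<Lambda> \<omega> \<bullet> \<Lambda> \<omega>"] by simp
  then show "AE \<omega> in M. \<Lambda> \<omega> = 0" by eventually_elim simp
qed

lemma equilibrium_at_iff_quadratic_nonneg:
  fixes A C Q :: "nat \<Rightarrow> nat \<Rightarrow> real^'n^'n" and B D :: "nat \<Rightarrow> nat \<Rightarrow> real^'m^'n"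
    and R :: "nat \<Rightarrow> nat \<Rightarrow> real^'m^'m" and u :: "nat \<Rightarrow> 'a \<Rightarrow> real^'m"
  assumes "k < N"
    and Q: "\<forall>l\<in>{k..<N}. transpose (Q k l) = Q k l" and R: "\<forall>l\<in>{k..<N}. transpose (R k l) = R k l"
    and G: "transpose (G k) = G k"
    and y: "y \<in> L2k M x0 w k" and u: "\<forall>l\<in>{k..<N}. u l \<in> L2k M x0 w l"
    and Z: "adjoint_solution (A k) (C k) (Q k) (G k) N k (traj (A k) (B k) (C k) (D k) w k y u) Z"
  shows "(\<forall>ubar\<in>L2k M x0 w k.
            Jcost M A B C D Q R G w N k y u \<le> Jcost M A B C D Q R G w N k y (u(k := ubar)))
    \<longleftrightarrow> (\<forall>v\<in>L2k M x0 w k. \<forall>r. 0 \<le>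
          2 * r * (\<integral>\<omega>. v \<omega> \<bullet> stationarity_residual (B k k) (D k k) (R k k) k (u k) Z \<omega> \<partial>M)
          + r\<^sup>2 * convexity_functional (A k) (B k) (C k) (D k) (Q k) (R k) (G k) N k v)"
    (is "?equilibrium \<longleftrightarrow> (\<forall>v\<in>_. \<forall>r. 0 \<le> 2 * r * ?I v + r\<^sup>2 * ?\<Phi> v)")
proof -
  let ?J = "Jcost M A B C D Q R G w N k y"
  have uk: "u k \<in> L2k M x0 w k" using u \<open>k < N\<close> by simp
  have update: "?J (u(k := (\<lambda>\<omega>. u k \<omega> + r *\<^sub>R v \<omega>))) = ?J u + (2 * r * ?I v + r\<^sup>2 * ?\<Phi> v)"
    if "v \<in> L2k M x0 w k" for v :: "'a \<Rightarrow> real^'m" and r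
    using Jcost_pulse_update[where A=A and B=B and C=C and D=D and Q=Q and R=R and G=G and k=k,
        OF \<open>k < N\<close> Q R G y u L2k_scaleR[OF that] Z]
    by (simp add: convexity_functional_scaleR)
  show ?thesis
  proof (intro iffI ballI allI)
    fix v :: "'a \<Rightarrow> real^'m" and r :: real
    assume H: ?equilibrium and v: "v \<in> L2k M x0 w k"
    have "(\<lambda>\<omega>. u k \<omega> + r *\<^sub>R v \<omega>) \<in> L2k M x0 w k"
      using uk v by (intro L2k_add L2k_scaleR)
    with H have "?J u \<le> ?J (u(k := (\<lambda>\<omega>. u k \<omega> + r *\<^sub>R v \<omega>)))" by (rule bspec)
    then show "0 \<le> 2 * r * ?I v + r\<^sup>2 * ?\<Phi> v"
      unfolding update[OF v] by linarith
  next
    fix ubar :: "'a \<Rightarrow> real^'m"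
    assume H: "\<forall>v\<in>L2k M x0 w k. \<forall>r. 0 \<le> 2 * r * ?I v + r\<^sup>2 * ?\<Phi> v"
      and ubar: "ubar \<in> L2k M x0 w k"
    define v where "v = (\<lambda>\<omega>. ubar \<omega> - u k \<omega>)"
    have v: "v \<in> L2k M x0 w k" unfolding v_def using ubar uk by (rule L2k_diff)
    have ubar_eq: "u(k := ubar) = u(k := (\<lambda>\<omega>. u k \<omega> + 1 *\<^sub>R v \<omega>))" by (simp add: v_def)
    have "0 \<le> 2 * 1 * ?I v + 1\<^sup>2 * ?\<Phi> v"
      using H v by blast
    then show "?J u \<le> ?J (u(k := ubar))"
      unfolding ubar_eq update[OF v] by linarith
  qed
qed

lemma equilibrium_at_iff:
  fixes A C Q :: "nat \<Rightarrow> nat \<Rightarrow> real^'n^'n" and B D :: "nat \<Rightarrow> nat \<Rightarrow> real^'m^'n"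
    and R :: "nat \<Rightarrow> nat \<Rightarrow> real^'m^'m" and u :: "nat \<Rightarrow> 'a \<Rightarrow> real^'m"
  assumes "k < N"
    and Q: "\<forall>l\<in>{k..<N}. transpose (Q k l) = Q k l" and R: "\<forall>l\<in>{k..<N}. transpose (R k l) = R k l"
    and G: "transpose (G k) = G k"
    and y: "y \<in> L2k M x0 w k" and u: "\<forall>l\<in>{k..<N}. u l \<in> L2k M x0 w l"
    and Z: "adjoint_solution (A k) (C k) (Q k) (G k) N k (traj (A k) (B k) (C k) (D k) w k y u) Z"
  shows "(\<forall>ubar\<in>L2k M x0 w k.
            Jcost M A B C D Q R G w N k y u \<le> Jcost M A B C D Q R G w N k y (u(k := ubar)))
    \<longleftrightarrow> (AE \<omega> in M. stationarity_residual (B k k) (D k k) (R k k) k (u k) Z \<omega> = 0)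
       \<and> (\<forall>v\<in>L2k M x0 w k. 0 \<le> convexity_functional (A k) (B k) (C k) (D k) (Q k) (R k) (G k) N k v)"
proof -
  let ?\<Lambda> = "stationarity_residual (B k k) (D k k) (R k k) k (u k) Z"
  let ?\<Phi> = "convexity_functional (A k) (B k) (C k) (D k) (Q k) (R k) (G k) N k"
  have uk: "u k \<in> L2k M x0 w k" using u \<open>k < N\<close> by simp
  have ZS: "square_integrable M (Z (Suc k))" using Z \<open>k < N\<close> by (simp add: adjoint_solution_def)
  have "(\<forall>ubar\<in>L2k M x0 w k.
            Jcost M A B C D Q R G w N k y u \<le> Jcost M A B C D Q R G w N k y (u(k := ubar)))
      \<longleftrightarrow> (\<forall>v\<in>L2k M x0 w k. \<forall>r. 0 \<le> 2 * r * (\<integral>\<omega>. v \<omega> \<bullet> ?\<Lambda> \<omega> \<partial>M) + r\<^sup>2 * ?\<Phi> v)"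
    by (rule equilibrium_at_iff_quadratic_nonneg[where A=A and B=B and C=C and D=D and Q=Q and R=R
          and G=G and k=k, OF assms])
  also have "\<dots> \<longleftrightarrow> (\<forall>v\<in>L2k M x0 w k. (\<integral>\<omega>. v \<omega> \<bullet> ?\<Lambda> \<omega> \<partial>M) = 0 \<and> 0 \<le> ?\<Phi> v)"
    by (simp only: quadratic_nonneg_iff)
  also have "\<dots> \<longleftrightarrow> (AE \<omega> in M. ?\<Lambda> \<omega> = 0) \<and> (\<forall>v\<in>L2k M x0 w k. 0 \<le> ?\<Phi> v)"
    by (simp only: ball_conj_distrib AE_eq_0_iff_orthogonal_L2k[OF stationarity_residual_L2k[where Z=Z
          and k=k and b="B k k" and d="D k k" and r="R k k", OF uk ZS]])
  finally show ?thesis .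
qed

lemma cond_ii_iff:
  fixes A C Q :: "nat \<Rightarrow> nat \<Rightarrow> real^'n^'n" and B D :: "nat \<Rightarrow> nat \<Rightarrow> real^'m^'n"
    and R :: "nat \<Rightarrow> nat \<Rightarrow> real^'m^'m" and u :: "nat \<Rightarrow> 'a \<Rightarrow> real^'m"
  shows "cond_ii M x0 A B C D Q R G w N t x u \<longleftrightarrow> u \<in> L2proc M x0 w N t \<and>
     (\<forall>k\<in>{t..<N}.
       (\<exists>Z. adjoint_solution (A k) (C k) (Q k) (G k) N k
               (traj (A k) (B k) (C k) (D k) w k (eqstate A B C D w t x u k) u) Z
          \<and> (AE \<omega> in M. stationarity_residual (B k k) (D k k) (R k k) k (u k) Z \<omega> = 0))
       \<and> (\<forall>v\<in>L2k M x0 w k. 0 \<le> convexity_functional (A k) (B k) (C k) (D k) (Q k) (R k) (G k) N k v))"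
  unfolding cond_ii_def
proof (intro conj_cong[OF refl] ball_cong[OF refl])
  fix k assume "k \<in> {t..<N}"
  then have "k < N" by simp
  have "(0 \<le> (INF ubar\<in>L2k M x0 w k.
            (let Y = traj (A k) (B k) (C k) (D k) w k (\<lambda>\<omega>. 0) (\<lambda>l. if l = k then ubar else (\<lambda>\<omega>. 0)) in
             ereal ((\<Sum>l=k..<N. (\<integral>\<omega>. Y l \<omega> \<bullet> (Q k l *v Y l \<omega>) \<partial>M))
                    + (\<integral>\<omega>. ubar \<omega> \<bullet> (R k k *v ubar \<omega>) \<partial>M)
                    + (\<integral>\<omega>. Y N \<omega> \<bullet> (G k *v Y N \<omega>) \<partial>M)))))
      \<longleftrightarrow> (\<forall>v\<in>L2k M x0 w k. 0 \<le> convexity_functional (A k) (B k) (C k) (D k) (Q k) (R k) (G k) N k v)"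
    by (simp add: convexity_functional_eq[OF \<open>k < N\<close>] le_INF_iff Let_def)
  then show "(let Xk = traj (A k) (B k) (C k) (D k) w k (eqstate A B C D w t x u k) u; F = Fprev M x0 w in
         (\<exists>Z. (\<forall>l\<in>{k..N}. Z l \<in> borel_measurable M \<and> integrable M (\<lambda>\<omega>. (norm (Z l \<omega>))\<^sup>2)) \<and>
            (\<forall>l\<in>{k..<N}. AE \<omega> in M. Z l \<omega> =
                 transpose (A k l) *v cexp M (F l) (Z (Suc l)) \<omega>
               + transpose (C k l) *v cexp M (F l) (\<lambda>\<eta>. w l \<eta> *\<^sub>R Z (Suc l) \<eta>) \<omega>
               + Q k l *v Xk l \<omega>) \<and>
            (AE \<omega> in M. Z N \<omega> = G k *v Xk N \<omega>) \<and>
            (AE \<omega> in M. 0 = R k k *v u k \<omega>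
               + transpose (B k k) *v cexp M (F k) (Z (Suc k)) \<omega>
               + transpose (D k k) *v cexp M (F k) (\<lambda>\<eta>. w k \<eta> *\<^sub>R Z (Suc k) \<eta>) \<omega>))
         \<and>
         (INF ubar\<in>L2k M x0 w k.
            (let Y = traj (A k) (B k) (C k) (D k) w k (\<lambda>\<omega>. 0) (\<lambda>l. if l = k then ubar else (\<lambda>\<omega>. 0)) in
             ereal ((\<Sum>l=k..<N. (\<integral>\<omega>. Y l \<omega> \<bullet> (Q k l *v Y l \<omega>) \<partial>M))
                    + (\<integral>\<omega>. ubar \<omega> \<bullet> (R k k *v ubar \<omega>) \<partial>M)
                    + (\<integral>\<omega>. Y N \<omega> \<bullet> (G k *v Y N \<omega>) \<partial>M)))) \<ge> 0)
    \<longleftrightarrow> (\<exists>Z. adjoint_solution (A k) (C k) (Q k) (G k) N k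
               (traj (A k) (B k) (C k) (D k) w k (eqstate A B C D w t x u k) u) Z
          \<and> (AE \<omega> in M. stationarity_residual (B k k) (D k k) (R k k) k (u k) Z \<omega> = 0))
       \<and> (\<forall>v\<in>L2k M x0 w k. 0 \<le> convexity_functional (A k) (B k) (C k) (D k) (Q k) (R k) (G k) N k v)"
    unfolding Let_def adjoint_solution_def square_integrable_def stationarity_residual_def
      eq_commute[of "0::real^'m"] conj_assoc
    by (rule conj_cong[OF refl])
qed

lemma equilibrium_at_iff_exists_adjoint:
  fixes A C Q :: "nat \<Rightarrow> nat \<Rightarrow> real^'n^'n" and B D :: "nat \<Rightarrow> nat \<Rightarrow> real^'m^'n"
    and R :: "nat \<Rightarrow> nat \<Rightarrow> real^'m^'m" and u :: "nat \<Rightarrow> 'a \<Rightarrow> real^'m"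
  assumes "k < N"
    and Q: "\<forall>l\<in>{k..<N}. transpose (Q k l) = Q k l" and R: "\<forall>l\<in>{k..<N}. transpose (R k l) = R k l"
    and G: "transpose (G k) = G k"
    and y: "y \<in> L2k M x0 w k" and u: "\<forall>l\<in>{k..<N}. u l \<in> L2k M x0 w l"
  shows "(\<forall>ubar\<in>L2k M x0 w k.
            Jcost M A B C D Q R G w N k y u \<le> Jcost M A B C D Q R G w N k y (u(k := ubar)))
    \<longleftrightarrow> (\<exists>Z. adjoint_solution (A k) (C k) (Q k) (G k) N k (traj (A k) (B k) (C k) (D k) w k y u) Z
          \<and> (AE \<omega> in M. stationarity_residual (B k k) (D k k) (R k k) k (u k) Z \<omega> = 0))
       \<and> (\<forall>v\<in>L2k M x0 w k. 0 \<le> convexity_functional (A k) (B k) (C k) (D k) (Q k) (R k) (G k) N k v)"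
proof -
  let ?X = "traj (A k) (B k) (C k) (D k) w k y u"
  note iff = equilibrium_at_iff[where A=A and B=B and C=C and D=D and Q=Q and R=R and G=G and k=k,
      OF \<open>k < N\<close> Q R G y u]
  have "adjoint_solution (A k) (C k) (Q k) (G k) N k ?X
      (\<lambda>l. adjoint_from_end (A k) (C k) (Q k) (G k) N ?X (N - l))"
    using \<open>k < N\<close> traj_L2k[OF y u] by (intro adjoint_solution_adjoint_from_end) (auto simp: L2k_iff)
  with iff show ?thesis by blast
qed

lemma open_loop_equilibrium_iff_cond_ii:
  assumes Q: "\<And>s k. s < N \<Longrightarrow> s \<le> k \<Longrightarrow> k < N \<Longrightarrow> transpose (Q s k) = Q s k"
    and R: "\<And>s k. s < N \<Longrightarrow> s \<le> k \<Longrightarrow> k < N \<Longrightarrow> transpose (R s k) = R s k"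
    and G: "\<And>s. s < N \<Longrightarrow> transpose (G s) = G s"
    and x: "x \<in> L2k M x0 w t"
  shows "open_loop_equilibrium M x0 A B C D Q R G w N t x u \<longleftrightarrow> cond_ii M x0 A B C D Q R G w N t x u"
proof (cases "u \<in> L2proc M x0 w N t")
  case False
  then show ?thesis by (simp add: open_loop_equilibrium_def cond_ii_def)
next
  case True
  have "(\<forall>ubar\<in>L2k M x0 w k.
           Jcost M A B C D Q R G w N k (eqstate A B C D w t x u k) u
             \<le> Jcost M A B C D Q R G w N k (eqstate A B C D w t x u k) (u(k := ubar)))
    \<longleftrightarrow> (\<exists>Z. adjoint_solution (A k) (C k) (Q k) (G k) N k
               (traj (A k) (B k) (C k) (D k) w k (eqstate A B C D w t x u k) u) Z
          \<and> (AE \<omega> in M. stationarity_residual (B k k) (D k k) (R k k) k (u k) Z \<omega> = 0))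
       \<and> (\<forall>v\<in>L2k M x0 w k. 0 \<le> convexity_functional (A k) (B k) (C k) (D k) (Q k) (R k) (G k) N k v)"
    if k: "k \<in> {t..<N}" for k
  proof (rule equilibrium_at_iff_exists_adjoint)
    show "eqstate A B C D w t x u k \<in> L2k M x0 w k"
      unfolding eqstate_def using True k by (intro traj_L2k[OF x, where N=N]) (auto simp: L2proc_def)
  qed (use True k Q R G in \<open>auto simp: L2proc_def\<close>)
  then show ?thesis
    using True by (simp add: open_loop_equilibrium_def cond_ii_iff)
qed
end

theorem theorem2p1:
  fixes M :: "'a measure"
    and x0 :: "'a \<Rightarrow> real^'n"
    and w :: "nat \<Rightarrow> 'a \<Rightarrow> real"
    and A C :: "nat \<Rightarrow> nat \<Rightarrow> real^'n^'n"
    and B D :: "nat \<Rightarrow> nat \<Rightarrow> real^'m^'n"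
    and Q :: "nat \<Rightarrow> nat \<Rightarrow> real^'n^'n"
    and R :: "nat \<Rightarrow> nat \<Rightarrow> real^'m^'m"
    and G :: "nat \<Rightarrow> real^'n^'n"
    and N t :: nat
    and x :: "'a \<Rightarrow> real^'n"
  assumes "prob_space M"
    and "x0 \<in> borel_measurable M"
    and "\<And>k. w k \<in> borel_measurable M"
    and "\<And>k. integrable M (w k)"
    and "\<And>k. AE \<omega> in M. real_cond_exp M (Fprev M x0 w k) (w k) \<omega> = 0"
    and "\<And>k. integrable M (\<lambda>\<omega>. (w k \<omega>)\<^sup>2)"
    and "\<And>k. AE \<omega> in M. real_cond_exp M (Fprev M x0 w k) (\<lambda>\<omega>. (w k \<omega>)\<^sup>2) \<omega> = 1"
    and "\<And>s k. s < N \<Longrightarrow> s \<le> k \<Longrightarrow> k < N \<Longrightarrow> transpose (Q s k) = Q s k"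
    and "\<And>s k. s < N \<Longrightarrow> s \<le> k \<Longrightarrow> k < N \<Longrightarrow> transpose (R s k) = R s k"
    and "\<And>s. s < N \<Longrightarrow> transpose (G s) = G s"
    and "0 < N"
    and "t < N"
    and "x \<in> L2k M x0 w t"
  shows "((\<exists>u. open_loop_equilibrium M x0 A B C D Q R G w N t x u)
            \<longleftrightarrow> (\<exists>u. cond_ii M x0 A B C D Q R G w N t x u))
         \<and> (\<forall>u. cond_ii M x0 A B C D Q R G w N t x u
                 \<longrightarrow> open_loop_equilibrium M x0 A B C D Q R G w N t x u)"
proof -
  interpret unit_variance_noise M x0 w
    using assms(1-3,6,7) by (simp add: unit_variance_noise_def unit_variance_noise_axioms_def)
  have "open_loop_equilibrium M x0 A B C D Q R G w N t x u \<longleftrightarrow> cond_ii M x0 A B C D Q R G w N t x u" for u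
    using assms(8-10,13) by (rule open_loop_equilibrium_iff_cond_ii)
  then show ?thesis by blast
qed

end
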